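(* Let $n,m$ be positive integers and $\mathbf a\in\mathbb N^n$. Then $$v^{(n,m)}(\mathbf a)=\sum_{\mathbf j\in\{0,1\}^n:\ \chi(\mathbf a)\trianglerighteq_1\mathbf j} v^{(n,m-1)}(\mathbf j).$$
   Context: $G(n,m)$ is the directed graph with vertex set $\{(i,j):1\le i\le n,\ 0\le j\le m\}\cup\{s\}$ and edges $((i,j),(i,j+1))$ for $1\le i\le n$, $0\le j\le m-1$; $((i,j),(i+1,j))$ for $1\le i\le n-1$, $0\le j\le m$; and $((n,j),s)$ for $0\le j\le m$. $\mathcal F_{G(n,m)}(\mathbf a)$ is the set of nonnegative real edge weightings such that at each vertex outflow minus inflow equals its netflow: $a_i$ at $(i,0)$, $-\sum_i a_i$ at $s$, $0$ elsewhere. $v^{(n,m)}(\mathbf a)$ denotes the number of vertices of $\mathcal F_{G(n,m)}(\mathbf a)$, with the convention $v^{(n,0)}(\mathbf j)=1$. $\chi(\mathbf a)\in\{0,1\}^n$ is the vector with $\chi(\mathbf a)_i=1$ iff $a_i>0$. For $\mathbf v,\mathbf w\in\mathbb N^n$, $\mathbf v\trianglerighteq\mathbf w$ (dominance) means $\sum_{k\le i}v_k\ge\sum_{k\le i}w_k$ for all $i$. For $\mathbf v,\mathbf w\in\mathbb N^n$ with $\mathbf v\trianglerighteq\mathbf w$ and $\chi(\mathbf v)\trianglerighteq\chi(\mathbf w)$, let $Z_{\mathbf v}=\{i:v_i=0\}$, $Z_{\mathbf w}=\{i:w_i=0\}$, and build the matching $M\subseteq Z_{\mathbf v}\times Z_{\mathbf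 w}$ by repeatedly taking the largest unmatched index $i'\in Z_{\mathbf v}$ and matching it to the largest unmatched index of $Z_{\mathbf w}$ that is $\le i'$, until all of $Z_{\mathbf v}$ is matched. Set $z=\max\{\max\{i-j:(i,j)\in M\},1\}$; we write $\mathbf v\trianglerighteq_z\mathbf w$. In particular $\mathbf v\trianglerighteq_1\mathbf w$ means $\mathbf v\trianglerighteq\mathbf w$, $\chi(\mathbf v)\trianglerighteq\chi(\mathbf w)$, and $i-j\le1$ for all $(i,j)\in M$. *)

theory Defs
  imports Complex_Main
begin

text \<open>Vertices of G(n,m): V i j stands for (i,j); S is the sink s.\<close>
datatype gv = V nat nat | S

definition gverts :: "nat \<Rightarrow> nat \<Rightarrow> gv set" where
  "gverts n m = {V i j | i j. 1 \<le> i \<and> i \<le> n \<and> j \<le> m} \<union> {S}"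

definition gedges :: "nat \<Rightarrow> nat \<Rightarrow> (gv \<times> gv) set" where
  "gedges n m =
     {(V i j, V i (j+1)) | i j. 1 \<le> i \<and> i \<le> n \<and> j < m}
   \<union> {(V i j, V (i+1) j) | i j. 1 \<le> i \<and> i < n \<and> j \<le> m}
   \<union> {(V n j, S) | j. j \<le> m}"

text \<open>Netflow: a_i at (i,0), minus the total at s, 0 elsewhere.
  The vector a in N^n is a list of length n; a_i = a ! (i-1).\<close>
definition netflow :: "nat \<Rightarrow> nat list \<Rightarrow> gv \<Rightarrow> real" where
  "netflow n a x = (case x of
      V i j \<Rightarrow> (if j = 0 \<and> 1 \<le> i \<and> i \<le> n then real (a ! (i-1)) else 0)
    | S \<Rightarrow> - real (sum_list a))"

text \<open>Flow polytope: nonnegative edge weightings (functions on pairs of vertices,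
  zero off the edge set) satisfying outflow - inflow = netflow at every vertex.\<close>
definition flow_polytope :: "nat \<Rightarrow> nat \<Rightarrow> nat list \<Rightarrow> (gv \<times> gv \<Rightarrow> real) set" where
  "flow_polytope n m a = {f.
      (\<forall>e. e \<notin> gedges n m \<longrightarrow> f e = 0)
    \<and> (\<forall>e\<in>gedges n m. 0 \<le> f e)
    \<and> (\<forall>x\<in>gverts n m.
          (\<Sum>e\<in>{e\<in>gedges n m. fst e = x}. f e) - (\<Sum>e\<in>{e\<in>gedges n m. snd e = x}. f e)
          = netflow n a x)}"

definition extreme_points :: "('a \<Rightarrow> real) set \<Rightarrow> ('a \<Rightarrow> real) set" where
  "extreme_points P = {x \<in> P. \<not> (\<exists>y\<in>P. \<exists>z\<in>P. \<exists>t::real. y \<noteq> z \<and> 0 < t \<and> t < 1 \<and>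
                                     x = (\<lambda>e. (1 - t) * y e + t * z e))}"

text \<open>v^(n,m)(a), with the convention v^(n,0)(j) = 1.\<close>
definition num_vertices :: "nat \<Rightarrow> nat \<Rightarrow> nat list \<Rightarrow> nat" where
  "num_vertices n m a = (if m = 0 then 1 else card (extreme_points (flow_polytope n m a)))"

definition chi :: "nat list \<Rightarrow> nat list" where
  "chi a = map (\<lambda>x. if 0 < x then 1 else 0) a"

definition dominates :: "nat list \<Rightarrow> nat list \<Rightarrow> bool" where
  "dominates v w \<longleftrightarrow> (\<forall>i \<le> length v. sum_list (take i w) \<le> sum_list (take i v))"

text \<open>Zero index set, 1-based.\<close>
definition zeros :: "nat list \<Rightarrow> nat set" where
  "zeros v = {i. 1 \<le> i \<and> i \<le> length v \<and> v ! (i-1) = 0}"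

fun greedy_match :: "nat list \<Rightarrow> nat set \<Rightarrow> (nat \<times> nat) list option" where
  "greedy_match [] A = Some []"
| "greedy_match (i # is) A =
     (let C = {j \<in> A. j \<le> i} in
      if C = {} then None
      else (let j = Max C in map_option (Cons (i, j)) (greedy_match is (A - {j}))))"

definition matching :: "nat list \<Rightarrow> nat list \<Rightarrow> (nat \<times> nat) list option" where
  "matching v w = greedy_match (rev (sorted_list_of_set (zeros v))) (zeros w)"

definition dominates_z :: "nat list \<Rightarrow> nat list \<Rightarrow> nat \<Rightarrow> bool" where
  "dominates_z v w z \<longleftrightarrow> length v = length w \<and> dominates v w \<and> dominates (chi v) (chi w) \<and>
     (\<exists>M. matching v w = Some M \<and> z = Max ({i - j | i j. (i, j) \<in> set M} \<union> {1}))"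

end

theory Submission
  imports Defs
begin

text \<open>
  A flow on \<open>G(n, m + 1)\<close> consists of its first column together with a flow on the remaining
  columns, which form a copy of \<open>G(n, m)\<close> whose netflow \<open>b\<close> is the vector of flows on the edges
  leaving the first column to the right. At a vertex of the flow polytope no vertex of the first
  column uses both of its outgoing edges: otherwise two paths to the sink, one through each of
  them, differ by a circulation along which the flow can be moved in both directions. Once it is
  known which rows send their flow to the right, recorded as a 0/1 pattern \<open>w\<close>, conservation
  determines the first column. So the vertices of \<open>G(n, m + 1)\<close> correspond to pairs of a pattern
  in which every row sent to the right has flow to send, and a vertex of \<open>G(n, m)\<close> with the
  resulting netflow \<open>b\<close>. Then \<open>\<chi>(b) = w\<close>, and by the same correspondence the number of vertices
  depends only on the support of the netflow. Finally, an induction on \<open>n\<close> along the greedy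
  matching shows that these patterns are exactly the 0/1 vectors \<open>j\<close> with \<open>\<chi>(a) \<unrhd>\<^sub>1 j\<close>.
\<close>

definition right_flow :: "(gv \<times> gv \<Rightarrow> real) \<Rightarrow> nat \<Rightarrow> nat \<Rightarrow> real" where
  "right_flow f i j = f (V i j, V i (Suc j))"

definition down_flow :: "nat \<Rightarrow> (gv \<times> gv \<Rightarrow> real) \<Rightarrow> nat \<Rightarrow> nat \<Rightarrow> real" where
  "down_flow n f i j = (if i < n then f (V i j, V (Suc i) j) else f (V i j, S))"

definition outflow :: "nat \<Rightarrow> nat \<Rightarrow> (gv \<times> gv \<Rightarrow> real) \<Rightarrow> nat \<Rightarrow> nat \<Rightarrow> real" where
  "outflow n m f i j = (if j < m then right_flow f i j else 0) + down_flow n f i j"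

definition inflow :: "nat \<Rightarrow> (gv \<times> gv \<Rightarrow> real) \<Rightarrow> nat \<Rightarrow> nat \<Rightarrow> real" where
  "inflow n f i j = (if 0 < j then right_flow f i (j - 1) else 0) + (if 1 < i then down_flow n f (i - 1) j else 0)"

definition is_flow :: "nat \<Rightarrow> nat \<Rightarrow> nat list \<Rightarrow> (gv \<times> gv \<Rightarrow> real) \<Rightarrow> bool" where
  "is_flow n m a f \<longleftrightarrow> (\<forall>e. e \<notin> gedges n m \<longrightarrow> f e = 0) \<and> (\<forall>e. 0 \<le> f e) \<and>
     (\<forall>i j. 1 \<le> i \<longrightarrow> i \<le> n \<longrightarrow> j \<le> m \<longrightarrow>
        outflow n m f i j - inflow n f i j = (if j = 0 then real (a ! (i - 1)) else 0)) \<and>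
     (\<Sum>j\<le>m. f (V n j, S)) = real (sum_list a)"

lemma mem_gedges:
  assumes "1 \<le> n"
  shows "(x, y) \<in> gedges n m \<longleftrightarrow> (\<exists>i j. x = V i j \<and> 1 \<le> i \<and> i \<le> n \<and> j \<le> m \<and>
      ((j < m \<and> y = V i (Suc j)) \<or> (i < n \<and> y = V (Suc i) j) \<or> (i = n \<and> y = S)))"
  unfolding gedges_def using assms by auto

lemma mem_gverts: "x \<in> gverts n m \<longleftrightarrow> (\<exists>i j. x = V i j \<and> 1 \<le> i \<and> i \<le> n \<and> j \<le> m) \<or> x = S"
  unfolding gverts_def by auto

lemma finite_gedges: "finite (gedges n m)"
proof -
  let ?X = "insert S ((\<lambda>(i, j). V i j) ` ({..n} \<times> {..m}))"
  have "gedges n m \<subseteq> ?X \<times> ?X" unfolding gedges_def by auto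
  then show ?thesis by (rule finite_subset) auto
qed

lemma sum_out_edges:
  assumes "1 \<le> i" "i \<le> n" "j \<le> m"
  shows "(\<Sum>e\<in>{e \<in> gedges n m. fst e = V i j}. f e) = outflow n m f i j"
proof -
  have "{e \<in> gedges n m. fst e = V i j} =
      (if j < m then {(V i j, V i (Suc j))} else {}) \<union> {(V i j, if i < n then V (Suc i) j else S)}"
    using assms by (auto simp: mem_gedges[OF le_trans[OF assms(1,2)]])
  then show ?thesis unfolding outflow_def right_flow_def down_flow_def by auto
qed

lemma sum_in_edges:
  assumes "1 \<le> i" "i \<le> n" "j \<le> m"
  shows "(\<Sum>e\<in>{e \<in> gedges n m. snd e = V i j}. f e) = inflow n f i j"
proof -
  have "{e \<in> gedges n m. snd e = V i j} =
      (if 0 < j then {(V i (j - 1), V i j)} else {}) \<union> (if 1 < i then {(V (i - 1) j, V i j)} else {})"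
    using assms by (auto simp: mem_gedges[OF le_trans[OF assms(1,2)]])
  then show ?thesis unfolding inflow_def right_flow_def down_flow_def using assms by auto
qed

lemma out_edges_sink: "1 \<le> n \<Longrightarrow> {e \<in> gedges n m. fst e = S} = {}"
  by (auto simp: mem_gedges)

lemma sum_in_edges_sink:
  assumes "1 \<le> n"
  shows "(\<Sum>e\<in>{e \<in> gedges n m. snd e = S}. f e) = (\<Sum>j\<le>m. f (V n j, S))"
proof -
  have "{e \<in> gedges n m. snd e = S} = (\<lambda>j. (V n j, S)) ` {..m}"
    using assms by (auto simp: mem_gedges)
  then show ?thesis by (simp add: sum.reindex inj_on_def)
qed

lemma flow_polytope_iff_is_flow:
  assumes n: "1 \<le> n"
  shows "f \<in> flow_polytope n m a \<longleftrightarrow> is_flow n m a f"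
proof -
  let ?div = "\<lambda>x. (\<Sum>e\<in>{e\<in>gedges n m. fst e = x}. f e) - (\<Sum>e\<in>{e\<in>gedges n m. snd e = x}. f e)"
  have at_V: "?div (V i j) = netflow n a (V i j) \<longleftrightarrow>
      outflow n m f i j - inflow n f i j = (if j = 0 then real (a ! (i - 1)) else 0)"
    if "1 \<le> i" "i \<le> n" "j \<le> m" for i j
    using that by (simp add: sum_out_edges sum_in_edges netflow_def)
  have at_S: "?div S = netflow n a S \<longleftrightarrow> (\<Sum>j\<le>m. f (V n j, S)) = real (sum_list a)"
    by (simp add: out_edges_sink[OF n] sum_in_edges_sink[OF n] netflow_def)
  have "(\<forall>x\<in>gverts n m. ?div x = netflow n a x) \<longleftrightarrow>
     (\<forall>i j. 1 \<le> i \<longrightarrow> i \<le> n \<longrightarrow> j \<le> m \<longrightarrow>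
        outflow n m f i j - inflow n f i j = (if j = 0 then real (a ! (i - 1)) else 0)) \<and>
     (\<Sum>j\<le>m. f (V n j, S)) = real (sum_list a)" (is "?global \<longleftrightarrow> ?local")
  proof
    assume ?global
    moreover have "V i j \<in> gverts n m" if "1 \<le> i" "i \<le> n" "j \<le> m" for i j
      using that by (auto simp: mem_gverts)
    ultimately show ?local using at_V at_S by (auto simp: mem_gverts)
  next
    assume ?local
    then show ?global using at_V at_S by (auto simp: mem_gverts)
  qed
  moreover have "(\<forall>e. e \<notin> gedges n m \<longrightarrow> f e = 0) \<Longrightarrow> (\<forall>e\<in>gedges n m. 0 \<le> f e) \<longleftrightarrow> (\<forall>e. 0 \<le> f e)"
    by (metis order_refl)
  ultimately show ?thesis unfolding flow_polytope_def is_flow_def by blast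
qed

lemma is_flow_zero_off_edges: "is_flow n m a f \<Longrightarrow> e \<notin> gedges n m \<Longrightarrow> f e = 0"
  unfolding is_flow_def by blast

lemma is_flow_nonneg: "is_flow n m a f \<Longrightarrow> 0 \<le> f e"
  unfolding is_flow_def by blast

lemma is_flow_conservation:
  "is_flow n m a f \<Longrightarrow> 1 \<le> i \<Longrightarrow> i \<le> n \<Longrightarrow> j \<le> m \<Longrightarrow>
    outflow n m f i j - inflow n f i j = (if j = 0 then real (a ! (i - 1)) else 0)"
  unfolding is_flow_def by blast

lemma is_flow_sink: "is_flow n m a f \<Longrightarrow> (\<Sum>j\<le>m. f (V n j, S)) = real (sum_list a)"
  unfolding is_flow_def by blast

lemma is_flow_inflow_le_outflow:
  "is_flow n m a f \<Longrightarrow> 1 \<le> i \<Longrightarrow> i \<le> n \<Longrightarrow> j \<le> m \<Longrightarrow> inflow n f i j \<le> outflow n m f i j"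
  using is_flow_conservation[of n m a f i j] by (cases "j = 0") auto

text \<open>Column 0 of the flow with netflow \<open>a\<close> in which row \<open>i\<close> sends everything to the right if
  \<open>w ! (i - 1) = 1\<close> and everything down otherwise (rows are counted from 1).\<close>
fun col0_down :: "nat list \<Rightarrow> nat list \<Rightarrow> nat \<Rightarrow> nat" where
  "col0_down a w 0 = 0"
| "col0_down a w (Suc i) = (if w ! i = 1 then 0 else col0_down a w i + a ! i)"

fun col0_right :: "nat list \<Rightarrow> nat list \<Rightarrow> nat \<Rightarrow> nat" where
  "col0_right a w 0 = 0"
| "col0_right a w (Suc i) = (if w ! i = 1 then col0_down a w i + a ! i else 0)"

definition col0_rights :: "nat list \<Rightarrow> nat list \<Rightarrow> nat list" where
  "col0_rights a w = map (\<lambda>k. col0_right a w (Suc k)) [0..<length a]"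

text \<open>A row told to send its flow to the right must have some flow to send; this makes the
  pattern recoverable from the flow.\<close>
definition admissible :: "nat list \<Rightarrow> nat list set" where
  "admissible a = {w. length w = length a \<and> set w \<subseteq> {0, 1} \<and>
      (\<forall>k<length a. w ! k = 1 \<longrightarrow> 0 < col0_right a w (Suc k))}"

lemma length_col0_rights [simp]: "length (col0_rights a w) = length a"
  unfolding col0_rights_def by simp

lemma nth_col0_rights: "k < length a \<Longrightarrow> col0_rights a w ! k = col0_right a w (Suc k)"
  unfolding col0_rights_def by simp

lemma col0_down_plus_sum_list_col0_rights:
  "col0_down a w (length a) + sum_list (col0_rights a w) = sum_list a"
proof -
  have "col0_down a w k + (\<Sum>i<k. col0_right a w (Suc i)) = (\<Sum>i<k. a ! i)" for k
    by (induction k) auto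
  moreover have "sum_list (col0_rights a w) = (\<Sum>i<length a. col0_right a w (Suc i))"
    unfolding col0_rights_def by (simp add: interv_sum_list_conv_sum_set_nat atLeast0LessThan)
  ultimately show ?thesis by (simp add: sum_list_sum_nth atLeast0LessThan)
qed

lemma col0_right_plus_down:
  "real (col0_right a w (Suc k)) + real (col0_down a w (Suc k)) - (if 0 < k then real (col0_down a w k) else 0)
    = real (a ! k)"
  by (cases k) auto

lemma admissible_nth:
  assumes w: "w \<in> admissible a" and k: "k < length a"
  shows "w ! k = (if 0 < col0_right a w (Suc k) then 1 else 0)"
proof -
  have "w ! k \<in> set w" using w k unfolding admissible_def by simp
  then have "w ! k \<in> {0, 1}" using w unfolding admissible_def by blast
  then show ?thesis using w k unfolding admissible_def by auto
qed

lemma finite_admissible: "finite (admissible a)"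
proof (rule finite_subset)
  show "admissible a \<subseteq> {w. set w \<subseteq> {0, 1} \<and> length w = length a}" unfolding admissible_def by auto
  show "finite {w. set w \<subseteq> {0::nat, 1} \<and> length w = length a}" by (rule finite_lists_length_eq) simp
qed

text \<open>\<open>B\<close> and \<open>C\<close> stand for the right and down flows of column 0.\<close>
lemma col0_flows_unique:
  fixes B C :: "nat \<Rightarrow> real"
  assumes cons: "\<And>i. 1 \<le> i \<Longrightarrow> i \<le> n \<Longrightarrow> B i + C i - (if 1 < i then C (i - 1) else 0) = real (a ! (i - 1))"
    and pattern: "\<And>i. 1 \<le> i \<Longrightarrow> i \<le> n \<Longrightarrow> (w ! (i - 1) = 1 \<longrightarrow> C i = 0) \<and> (w ! (i - 1) \<noteq> 1 \<longrightarrow> B i = 0)"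
    and i: "1 \<le> i" "i \<le> n"
  shows "C i = real (col0_down a w i) \<and> B i = real (col0_right a w i)"
proof -
  have "C (Suc k) = real (col0_down a w (Suc k)) \<and> B (Suc k) = real (col0_right a w (Suc k))"
    if "k < n" for k
    using that
  proof (induction k)
    case 0
    then show ?case using cons[of 1] pattern[of 1] by auto
  next
    case (Suc k)
    then have "C (Suc k) = real (col0_down a w (Suc k))" by simp
    moreover have "B (Suc (Suc k)) + C (Suc (Suc k)) - C (Suc k) = real (a ! Suc k)"
      using cons[of "Suc (Suc k)"] Suc.prems by simp
    moreover have "(w ! Suc k = 1 \<longrightarrow> C (Suc (Suc k)) = 0) \<and> (w ! Suc k \<noteq> 1 \<longrightarrow> B (Suc (Suc k)) = 0)"
      using pattern[of "Suc (Suc k)"] Suc.prems by simp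
    ultimately show ?case by (auto simp del: col0_down.simps simp: col0_down.simps(2)[of a w "Suc k"])
  qed
  moreover obtain k where "i = Suc k" "k < n" using i by (cases i) auto
  ultimately show ?thesis by blast
qed

subsection \<open>Removing and re-attaching the first column\<close>

definition shift_vertex :: "gv \<Rightarrow> gv" where
  "shift_vertex x = (case x of V i j \<Rightarrow> V i (Suc j) | S \<Rightarrow> S)"

definition shift_flow :: "(gv \<times> gv \<Rightarrow> real) \<Rightarrow> gv \<times> gv \<Rightarrow> real" where
  "shift_flow f = (\<lambda>(x, y). f (shift_vertex x, shift_vertex y))"

text \<open>The inverse operation: \<open>g\<close> moved one column to the right, preceded by a column 0 with
  right flows \<open>b\<close> and down flows \<open>c\<close>.\<close>
definition extend_flow :: "nat \<Rightarrow> (nat \<Rightarrow> real) \<Rightarrow> (nat \<Rightarrow> real) \<Rightarrow> (gv \<times> gv \<Rightarrow> real) \<Rightarrow> gv \<times> gv \<Rightarrow> real" where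
  "extend_flow n b c g = (\<lambda>(x, y). case x of S \<Rightarrow> 0 | V i j \<Rightarrow>
    (if j = 0 then (if 1 \<le> i \<and> i \<le> n then (if y = V i 1 then b i
        else if (i < n \<and> y = V (Suc i) 0) \<or> (i = n \<and> y = S) then c i else 0) else 0)
     else (case y of S \<Rightarrow> g (V i (j - 1), S)
        | V i' j' \<Rightarrow> if j' = 0 then 0 else g (V i (j - 1), V i' (j' - 1)))))"

definition convex_comb :: "real \<Rightarrow> ('a \<Rightarrow> real) \<Rightarrow> ('a \<Rightarrow> real) \<Rightarrow> 'a \<Rightarrow> real" where
  "convex_comb t y z = (\<lambda>e. (1 - t) * y e + t * z e)"

lemma shift_vertex_edge_iff:
  "1 \<le> n \<Longrightarrow> (shift_vertex x, shift_vertex y) \<in> gedges n (Suc m) \<longleftrightarrow> (x, y) \<in> gedges n m"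
  by (cases x; cases y) (auto simp: shift_vertex_def mem_gedges)

lemma extend_flow_shift_flow:
  assumes n: "1 \<le> n" and f: "is_flow n (Suc m) a f"
  shows "extend_flow n (\<lambda>i. right_flow f i 0) (\<lambda>i. down_flow n f i 0) (shift_flow f) = f"
proof (rule ext, clarify)
  fix x y
  have "(x, y) \<notin> gedges n (Suc m) \<Longrightarrow> f (x, y) = 0" by (rule is_flow_zero_off_edges[OF f])
  then show "extend_flow n (\<lambda>i. right_flow f i 0) (\<lambda>i. down_flow n f i 0) (shift_flow f) (x, y) = f (x, y)"
    using n by (cases x; cases y)
      (auto simp: extend_flow_def right_flow_def down_flow_def shift_flow_def shift_vertex_def mem_gedges)
qed

lemma shift_flow_extend_flow:
  assumes "\<And>e. e \<notin> gedges n m \<Longrightarrow> g e = 0"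
  shows "shift_flow (extend_flow n b c g) = g"
proof (rule ext, clarify)
  fix x y
  have "(S, y) \<notin> gedges n m" by (auto simp: gedges_def)
  then show "shift_flow (extend_flow n b c g) (x, y) = g (x, y)"
    using assms by (cases x; cases y) (simp_all add: extend_flow_def shift_flow_def shift_vertex_def)
qed

lemma extend_flow_cong:
  assumes "\<And>i. 1 \<le> i \<Longrightarrow> i \<le> n \<Longrightarrow> b i = b' i \<and> c i = c' i"
  shows "extend_flow n b c g = extend_flow n b' c' g"
  using assms by (intro ext) (auto simp: extend_flow_def split: gv.splits)

lemma extend_flow_convex_comb:
  "extend_flow n b c (convex_comb t g1 g2) = convex_comb t (extend_flow n b c g1) (extend_flow n b c g2)"
  by (intro ext) (auto simp: extend_flow_def convex_comb_def algebra_simps split: gv.splits)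

lemma shift_flow_convex_comb: "shift_flow (convex_comb t f1 f2) = convex_comb t (shift_flow f1) (shift_flow f2)"
  unfolding shift_flow_def convex_comb_def by (intro ext) auto

lemma right_flow_extend_flow: "1 \<le> i \<Longrightarrow> i \<le> n \<Longrightarrow> right_flow (extend_flow n b c g) i 0 = b i"
  by (simp add: right_flow_def extend_flow_def)

lemma down_flow_extend_flow: "1 \<le> i \<Longrightarrow> i \<le> n \<Longrightarrow> down_flow n (extend_flow n b c g) i 0 = c i"
  by (auto simp: down_flow_def extend_flow_def)

lemma is_flow_col0:
  assumes "is_flow n (Suc m) a f" "1 \<le> i" "i \<le> n"
  shows "right_flow f i 0 + down_flow n f i 0 - (if 1 < i then down_flow n f (i - 1) 0 else 0) = real (a ! (i - 1))"
  using is_flow_conservation[OF assms, of 0] by (simp add: outflow_def inflow_def)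

lemma is_flow_col0_sum:
  assumes f: "is_flow n (Suc m) a f"
  shows "k < n \<Longrightarrow> (\<Sum>i<Suc k. right_flow f (Suc i) 0) + down_flow n f (Suc k) 0 = (\<Sum>i<Suc k. real (a ! i))"
proof (induction k)
  case 0
  then show ?case using is_flow_col0[OF f, of 1] by simp
next
  case (Suc k)
  then show ?case using is_flow_col0[OF f, of "Suc (Suc k)"] by simp
qed

lemma is_flow_shift_flow:
  assumes n: "1 \<le> n" and a: "length a = n" and b: "length b = n" and f: "is_flow n (Suc m) a f"
    and right: "\<And>i. 1 \<le> i \<Longrightarrow> i \<le> n \<Longrightarrow> right_flow f i 0 = real (b ! (i - 1))"
  shows "is_flow n m b (shift_flow f)"
  unfolding is_flow_def
proof (intro conjI allI impI)
  fix e assume "e \<notin> gedges n m"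
  then show "shift_flow f e = 0"
    using shift_vertex_edge_iff[OF n, of "fst e" "snd e" m] is_flow_zero_off_edges[OF f]
    by (auto simp: shift_flow_def split: prod.splits)
next
  fix e show "0 \<le> shift_flow f e" using is_flow_nonneg[OF f] by (simp add: shift_flow_def split_beta)
next
  fix i j assume h: "1 \<le> i" "i \<le> n" "j \<le> m"
  have "outflow n m (shift_flow f) i j = outflow n (Suc m) f i (Suc j)"
    by (simp add: outflow_def right_flow_def down_flow_def shift_flow_def shift_vertex_def)
  moreover have "inflow n (shift_flow f) i j + (if j = 0 then right_flow f i 0 else 0) = inflow n f i (Suc j)"
    by (cases j) (simp_all add: inflow_def right_flow_def down_flow_def shift_flow_def shift_vertex_def)
  ultimately show "outflow n m (shift_flow f) i j - inflow n (shift_flow f) i j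
      = (if j = 0 then real (b ! (i - 1)) else 0)"
    using is_flow_conservation[OF f, of i "Suc j"] h right[OF h(1,2)] by auto
next
  from is_flow_col0_sum[OF f, of "n - 1"] have "(\<Sum>i<n. real (b ! i)) + down_flow n f n 0 = (\<Sum>i<n. real (a ! i))"
    using n right by simp
  then have "real (sum_list b) + f (V n 0, S) = real (sum_list a)"
    using a b by (simp add: sum_list_sum_nth atLeast0LessThan down_flow_def)
  moreover have "(\<Sum>j\<le>Suc m. f (V n j, S)) = f (V n 0, S) + (\<Sum>j\<le>m. f (V n (Suc j), S))"
    by (rule sum.atMost_Suc_shift)
  ultimately show "(\<Sum>j\<le>m. shift_flow f (V n j, S)) = real (sum_list b)"
    using is_flow_sink[OF f] by (simp add: shift_flow_def shift_vertex_def)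
qed

definition extend_by_pattern :: "nat \<Rightarrow> nat list \<Rightarrow> nat list \<Rightarrow> (gv \<times> gv \<Rightarrow> real) \<Rightarrow> gv \<times> gv \<Rightarrow> real" where
  "extend_by_pattern n a w = extend_flow n (\<lambda>i. real (col0_right a w i)) (\<lambda>i. real (col0_down a w i))"

lemma extend_flow_zero_off_edges:
  assumes n: "1 \<le> n" and g: "\<And>e. e \<notin> gedges n m \<Longrightarrow> g e = 0" and e: "(x, y) \<notin> gedges n (Suc m)"
  shows "extend_flow n b c g (x, y) = 0"
proof (cases x)
  case (V i j)
  show ?thesis
  proof (cases "j = 0")
    case True
    then show ?thesis using e V n by (auto simp: extend_flow_def mem_gedges)
  next
    case j: False
    have x: "x = shift_vertex (V i (j - 1))" using V j by (simp add: shift_vertex_def)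
    show ?thesis
    proof (cases y)
      case (V i' j')
      show ?thesis
      proof (cases "j' = 0")
        case True
        then show ?thesis using \<open>x = V i j\<close> V j by (simp add: extend_flow_def)
      next
        case j': False
        have "y = shift_vertex (V i' (j' - 1))" using V j' by (simp add: shift_vertex_def)
        then have "(V i (j - 1), V i' (j' - 1)) \<notin> gedges n m" using e x shift_vertex_edge_iff[OF n] by metis
        then show ?thesis using g \<open>x = V i j\<close> V j j' by (simp add: extend_flow_def)
      qed
    next
      case S
      have "shift_vertex S = S" by (simp add: shift_vertex_def)
      then have "(V i (j - 1), S) \<notin> gedges n m"
        using e x S shift_vertex_edge_iff[OF n, of "V i (j - 1)" S m] by metis
      then show ?thesis using g \<open>x = V i j\<close> S j by (simp add: extend_flow_def)
    qed
  qed
next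
  case S
  then show ?thesis by (simp add: extend_flow_def)
qed

lemma extend_by_pattern_conservation:
  assumes a: "length a = n" and g: "is_flow n m (col0_rights a w) g" and i: "1 \<le> i" "i \<le> n"
    and j: "j \<le> Suc m"
  shows "outflow n (Suc m) (extend_by_pattern n a w g) i j - inflow n (extend_by_pattern n a w g) i j
    = (if j = 0 then real (a ! (i - 1)) else 0)"
proof (cases j)
  case 0
  obtain k where k: "i = Suc k" using i by (cases i) auto
  have "outflow n (Suc m) (extend_by_pattern n a w g) i 0 = real (col0_right a w i) + real (col0_down a w i)"
    using i by (auto simp: outflow_def right_flow_def down_flow_def extend_by_pattern_def extend_flow_def)
  moreover have "inflow n (extend_by_pattern n a w g) i 0 = (if 1 < i then real (col0_down a w (i - 1)) else 0)"
    using i by (auto simp: inflow_def right_flow_def down_flow_def extend_by_pattern_def extend_flow_def)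
  ultimately show ?thesis using col0_right_plus_down[of a w k] 0 k by simp
next
  case (Suc j')
  have "outflow n (Suc m) (extend_by_pattern n a w g) i (Suc j') = outflow n m g i j'"
    by (simp add: outflow_def right_flow_def down_flow_def extend_by_pattern_def extend_flow_def)
  moreover have "inflow n (extend_by_pattern n a w g) i (Suc j')
      = inflow n g i j' + (if j' = 0 then real (col0_right a w i) else 0)"
    using i by (cases j') (auto simp: inflow_def right_flow_def down_flow_def extend_by_pattern_def extend_flow_def)
  moreover have "col0_rights a w ! (i - 1) = col0_right a w i" using i a by (simp add: nth_col0_rights)
  ultimately show ?thesis using is_flow_conservation[OF g i, of j'] j Suc by (cases "j' = 0") auto
qed

lemma is_flow_extend_by_pattern:
  assumes n: "1 \<le> n" and a: "length a = n" and g: "is_flow n m (col0_rights a w) g"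
  shows "is_flow n (Suc m) a (extend_by_pattern n a w g)"
  unfolding is_flow_def
proof (intro conjI allI impI)
  fix e assume "e \<notin> gedges n (Suc m)"
  then show "extend_by_pattern n a w g e = 0"
    using extend_flow_zero_off_edges[OF n is_flow_zero_off_edges[OF g], where x = "fst e" and y = "snd e"]
    by (simp add: extend_by_pattern_def)
next
  fix e show "0 \<le> extend_by_pattern n a w g e"
    using is_flow_nonneg[OF g]
    by (auto simp: extend_by_pattern_def extend_flow_def split: gv.splits prod.splits)
next
  fix i j assume "1 \<le> i" "i \<le> n" "j \<le> Suc m"
  then show "outflow n (Suc m) (extend_by_pattern n a w g) i j - inflow n (extend_by_pattern n a w g) i j
    = (if j = 0 then real (a ! (i - 1)) else 0)"
    by (rule extend_by_pattern_conservation[OF a g])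
next
  have "(\<Sum>j\<le>Suc m. extend_by_pattern n a w g (V n j, S))
      = extend_by_pattern n a w g (V n 0, S) + (\<Sum>j\<le>m. extend_by_pattern n a w g (V n (Suc j), S))"
    by (rule sum.atMost_Suc_shift)
  also have "\<dots> = real (col0_down a w n) + real (sum_list (col0_rights a w))"
    using n is_flow_sink[OF g] by (simp add: extend_by_pattern_def extend_flow_def)
  also have "\<dots> = real (sum_list a)"
    using col0_down_plus_sum_list_col0_rights[of a w] a by (metis of_nat_add)
  finally show "(\<Sum>j\<le>Suc m. extend_by_pattern n a w g (V n j, S)) = real (sum_list a)" .
qed

subsection \<open>Paths to the sink inside the support of a flow\<close>

lemma outflow_add: "outflow n m (\<lambda>e. h1 e + h2 e) i j = outflow n m h1 i j + outflow n m h2 i j"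
  by (simp add: outflow_def right_flow_def down_flow_def)

lemma inflow_add: "inflow n (\<lambda>e. h1 e + h2 e) i j = inflow n h1 i j + inflow n h2 i j"
  by (simp add: inflow_def right_flow_def down_flow_def)

lemma outflow_diff: "outflow n m (\<lambda>e. h1 e - h2 e) i j = outflow n m h1 i j - outflow n m h2 i j"
  by (simp add: outflow_def right_flow_def down_flow_def)

lemma inflow_diff: "inflow n (\<lambda>e. h1 e - h2 e) i j = inflow n h1 i j - inflow n h2 i j"
  by (simp add: inflow_def right_flow_def down_flow_def)

lemma outflow_add_scaled: "outflow n m (\<lambda>e. h1 e + s * h2 e) i j = outflow n m h1 i j + s * outflow n m h2 i j"
  by (simp add: outflow_def right_flow_def down_flow_def algebra_simps)

lemma inflow_add_scaled: "inflow n (\<lambda>e. h1 e + s * h2 e) i j = inflow n h1 i j + s * inflow n h2 i j"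
  by (simp add: inflow_def right_flow_def down_flow_def algebra_simps)

definition unit_flow :: "gv \<times> gv \<Rightarrow> gv \<times> gv \<Rightarrow> real" where
  "unit_flow e0 = (\<lambda>e. if e = e0 then 1 else 0)"

text \<open>A path of \<open>f\<close> from \<open>(i, j)\<close> to the sink, as a unit flow. The bound \<open>i + j \<le> i' + j'\<close> on the
  tails \<open>(i', j')\<close> of its edges keeps it off the edges leaving earlier vertices.\<close>
definition path_flow :: "nat \<Rightarrow> nat \<Rightarrow> (gv \<times> gv \<Rightarrow> real) \<Rightarrow> nat \<Rightarrow> nat \<Rightarrow> (gv \<times> gv \<Rightarrow> real) \<Rightarrow> bool" where
  "path_flow n m f i j h \<longleftrightarrow> (\<forall>e. h e \<noteq> 0 \<longrightarrow> 0 < f e) \<and>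
     (\<forall>e. h e \<noteq> 0 \<longrightarrow> (\<exists>i' j'. fst e = V i' j' \<and> i + j \<le> i' + j')) \<and>
     (\<forall>i' j'. 1 \<le> i' \<longrightarrow> i' \<le> n \<longrightarrow> j' \<le> m \<longrightarrow>
        outflow n m h i' j' - inflow n h i' j' = (if i' = i \<and> j' = j then 1 else 0)) \<and>
     (\<Sum>j'\<le>m. h (V n j', S)) = 1"

lemma
  assumes "path_flow n m f i j h"
  shows path_flow_support: "\<And>e. h e \<noteq> 0 \<Longrightarrow> 0 < f e"
    and path_flow_tails: "\<And>e. h e \<noteq> 0 \<Longrightarrow> \<exists>i' j'. fst e = V i' j' \<and> i + j \<le> i' + j'"
    and path_flow_divergence: "\<And>i' j'. 1 \<le> i' \<Longrightarrow> i' \<le> n \<Longrightarrow> j' \<le> m \<Longrightarrow>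
        outflow n m h i' j' - inflow n h i' j' = (if i' = i \<and> j' = j then 1 else 0)"
    and path_flow_sink_sum: "(\<Sum>j'\<le>m. h (V n j', S)) = 1"
  using assms unfolding path_flow_def by blast+

lemma path_flow_avoids:
  assumes "path_flow n m f i j h" "i' + j' < i + j"
  shows "h (V i' j', y) = 0"
  using path_flow_tails[OF assms(1), of "(V i' j', y)"] assms(2) by fastforce

lemma path_flow_Cons:
  assumes h: "path_flow n m f i2 j2 h" and e0: "0 < f e0" and tail: "fst e0 = V i j"
    and ij: "i + j < i2 + j2"
    and div: "\<And>i' j'. 1 \<le> i' \<Longrightarrow> i' \<le> n \<Longrightarrow> j' \<le> m \<Longrightarrow>
       outflow n m (unit_flow e0) i' j' - inflow n (unit_flow e0) i' j' =
       (if i' = i \<and> j' = j then 1 else 0) - (if i' = i2 \<and> j' = j2 then 1 else 0)"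
    and sink: "(\<Sum>j'\<le>m. unit_flow e0 (V n j', S)) = 0"
  shows "path_flow n m f i j (\<lambda>e. h e + unit_flow e0 e)"
  unfolding path_flow_def
proof (intro conjI allI impI)
  fix e assume "h e + unit_flow e0 e \<noteq> 0"
  then have "h e \<noteq> 0 \<or> e = e0" unfolding unit_flow_def by (auto split: if_splits)
  then show "0 < f e" using path_flow_support[OF h] e0 by blast
  show "\<exists>i' j'. fst e = V i' j' \<and> i + j \<le> i' + j'"
    using \<open>h e \<noteq> 0 \<or> e = e0\<close>
  proof
    assume "h e \<noteq> 0"
    then obtain i' j' where "fst e = V i' j'" "i2 + j2 \<le> i' + j'" using path_flow_tails[OF h] by blast
    then show ?thesis using ij by auto
  qed (use tail in auto)
next
  fix i' j' assume ij': "1 \<le> i'" "i' \<le> n" "j' \<le> m"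
  have "outflow n m h i' j' - inflow n h i' j' + (outflow n m (unit_flow e0) i' j' - inflow n (unit_flow e0) i' j')
      = (if i' = i \<and> j' = j then 1 else 0)"
    using path_flow_divergence[OF h ij'] div[OF ij'] by simp
  then show "outflow n m (\<lambda>e. h e + unit_flow e0 e) i' j' - inflow n (\<lambda>e. h e + unit_flow e0 e) i' j'
      = (if i' = i \<and> j' = j then 1 else 0)"
    unfolding outflow_add inflow_add by simp
next
  show "(\<Sum>j'\<le>m. h (V n j', S) + unit_flow e0 (V n j', S)) = 1"
    using path_flow_sink_sum[OF h] sink by (simp add: sum.distrib)
qed

lemma unit_flow_right_divergence:
  assumes "j < m"
  shows "outflow n m (unit_flow (V i j, V i (Suc j))) i' j' - inflow n (unit_flow (V i j, V i (Suc j))) i' j'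
     = (if i' = i \<and> j' = j then 1 else 0) - (if i' = i \<and> j' = Suc j then 1 else 0)"
  using assms by (cases "j' = j"; cases "j' = Suc j")
    (simp_all add: outflow_def inflow_def right_flow_def down_flow_def unit_flow_def)

lemma unit_flow_down_divergence:
  assumes "1 \<le> i" "i < n"
  shows "outflow n m (unit_flow (V i j, V (Suc i) j)) i' j' - inflow n (unit_flow (V i j, V (Suc i) j)) i' j'
     = (if i' = i \<and> j' = j then 1 else 0) - (if i' = Suc i \<and> j' = j then 1 else 0)"
  using assms by (cases "i' = i"; cases "i' = Suc i")
    (simp_all add: outflow_def inflow_def right_flow_def down_flow_def unit_flow_def)

lemma path_flow_Cons_right:
  assumes "path_flow n m f i (Suc j) h" "j < m" "0 < right_flow f i j"
  shows "path_flow n m f i j (\<lambda>e. h e + unit_flow (V i j, V i (Suc j)) e)"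
  using assms(3) by (intro path_flow_Cons[OF assms(1)] unit_flow_right_divergence[OF assms(2)])
    (simp_all add: right_flow_def unit_flow_def)

lemma path_flow_Cons_down:
  assumes "path_flow n m f (Suc i) j h" "1 \<le> i" "i < n" "0 < down_flow n f i j"
  shows "path_flow n m f i j (\<lambda>e. h e + unit_flow (V i j, V (Suc i) j) e)"
  using assms(2-4) by (intro path_flow_Cons[OF assms(1)] unit_flow_down_divergence[OF assms(2,3)])
    (simp_all add: down_flow_def unit_flow_def)

lemma path_flow_sink_edge:
  assumes "0 < f (V n j, S)" "j \<le> m"
  shows "path_flow n m f n j (unit_flow (V n j, S))"
  unfolding path_flow_def
proof (intro conjI allI impI)
  fix e assume "unit_flow (V n j, S) e \<noteq> 0"
  then have "e = (V n j, S)" unfolding unit_flow_def by (auto split: if_splits)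
  then show "0 < f e" "\<exists>i' j'. fst e = V i' j' \<and> n + j \<le> i' + j'" using assms(1) by auto
next
  fix i' j' assume "1 \<le> i'" "i' \<le> n" "j' \<le> m"
  then show "outflow n m (unit_flow (V n j, S)) i' j' - inflow n (unit_flow (V n j, S)) i' j'
      = (if i' = n \<and> j' = j then 1 else 0)"
    by (auto simp: outflow_def inflow_def right_flow_def down_flow_def unit_flow_def)
next
  show "(\<Sum>j'\<le>m. unit_flow (V n j, S) (V n j', S)) = 1" using assms(2) by (simp add: unit_flow_def)
qed

lemma outflow_pos_after_right:
  assumes f: "is_flow n m a f" and i: "1 \<le> i" "i \<le> n" and j: "j < m" and pos: "0 < right_flow f i j"
  shows "0 < outflow n m f i (Suc j)"
proof -
  have "0 \<le> (if 1 < i then down_flow n f (i - 1) (Suc j) else 0)"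
    using is_flow_nonneg[OF f] by (simp add: down_flow_def)
  then have "0 < inflow n f i (Suc j)" using pos by (simp add: inflow_def)
  then show ?thesis using is_flow_inflow_le_outflow[OF f i, of "Suc j"] j by simp
qed

lemma outflow_pos_after_down:
  assumes f: "is_flow n m a f" and i: "1 \<le> i" "i < n" and j: "j \<le> m" and pos: "0 < down_flow n f i j"
  shows "0 < outflow n m f (Suc i) j"
proof -
  have "0 \<le> (if 0 < j then right_flow f (Suc i) (j - 1) else 0)"
    using is_flow_nonneg[OF f] by (simp add: right_flow_def)
  then have "0 < inflow n f (Suc i) j" using pos i by (simp add: inflow_def)
  then show ?thesis using is_flow_inflow_le_outflow[OF f, of "Suc i" j] i j by simp
qed

lemma path_flow_exists:
  assumes f: "is_flow n m a f"
  shows "1 \<le> i \<Longrightarrow> i \<le> n \<Longrightarrow> j \<le> m \<Longrightarrow> 0 < outflow n m f i j \<Longrightarrow> \<exists>h. path_flow n m f i j h"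
proof (induction "n + m - (i + j)" arbitrary: i j rule: less_induct)
  case less
  have "(j < m \<and> 0 < right_flow f i j) \<or> 0 < down_flow n f i j"
    using less.prems(4) is_flow_nonneg[OF f]
    by (auto simp: outflow_def right_flow_def down_flow_def order_le_less split: if_splits)
  then consider (right) "j < m" "0 < right_flow f i j" | (down) "0 < down_flow n f i j" by blast
  then show ?case
  proof cases
    case right
    then obtain h where "path_flow n m f i (Suc j) h"
      using less.hyps[of i "Suc j"] less.prems outflow_pos_after_right[OF f] by fastforce
    then show ?thesis using path_flow_Cons_right right by blast
  next
    case down
    show ?thesis
    proof (cases "i < n")
      case True
      then obtain h where "path_flow n m f (Suc i) j h"
        using less.hyps[of "Suc i" j] less.prems outflow_pos_after_down[OF f] down by fastforce
      then show ?thesis using path_flow_Cons_down less.prems True down by blast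
    next
      case False
      then have "i = n" using less.prems by simp
      then show ?thesis using path_flow_sink_edge[of f n j m] down less.prems by (auto simp: down_flow_def)
    qed
  qed
qed

lemma path_flow_via_right:
  assumes f: "is_flow n m a f" and i: "1 \<le> i" "i \<le> n" and j: "j < m" and pos: "0 < right_flow f i j"
  obtains h where "path_flow n m f i j h" "h (V i j, V i (Suc j)) = 1"
proof -
  obtain h where h: "path_flow n m f i (Suc j) h"
    using path_flow_exists[OF f i, of "Suc j"] outflow_pos_after_right[OF f i j pos] j by auto
  then have "h (V i j, V i (Suc j)) = 0" by (rule path_flow_avoids) simp
  then show thesis
    using that path_flow_Cons_right[OF h j pos] by (simp add: unit_flow_def)
qed

lemma path_flow_via_down:
  assumes f: "is_flow n m a f" and i: "1 \<le> i" "i \<le> n" and j: "j \<le> m" and pos: "0 < down_flow n f i j"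
  obtains h where "path_flow n m f i j h" "h (V i j, V i (Suc j)) = 0"
proof (cases "i < n")
  case True
  obtain h where h: "path_flow n m f (Suc i) j h"
    using path_flow_exists[OF f, of "Suc i" j] outflow_pos_after_down[OF f i(1) True j pos] True j by auto
  then have "h (V i j, V i (Suc j)) = 0" by (rule path_flow_avoids) simp
  then show thesis
    using that path_flow_Cons_down[OF h i(1) True pos] by (simp add: unit_flow_def)
next
  case False
  then have "i = n" using i by simp
  then show thesis
    using that path_flow_sink_edge[of f n j m] pos j by (simp add: unit_flow_def down_flow_def)
qed

subsection \<open>At a vertex, flow leaves each vertex of the first column along one edge only\<close>

lemma exists_pos_scaled_le:
  fixes f H :: "'a \<Rightarrow> real"
  assumes fin: "finite {e. H e \<noteq> 0}" and supp: "\<And>e. H e \<noteq> 0 \<Longrightarrow> 0 < f e" and nonneg: "\<And>e. 0 \<le> f e"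
  shows "\<exists>\<epsilon>>0. \<forall>e. \<epsilon> * \<bar>H e\<bar> \<le> f e"
proof (cases "{e. H e \<noteq> 0} = {}")
  case True
  then show ?thesis using nonneg by (intro exI[of _ 1]) auto
next
  case False
  define \<epsilon> where "\<epsilon> = Min ((\<lambda>e. f e / \<bar>H e\<bar>) ` {e. H e \<noteq> 0})"
  have "0 < \<epsilon>" unfolding \<epsilon>_def using fin False supp by (subst Min_gr_iff) auto
  moreover have "\<epsilon> * \<bar>H e\<bar> \<le> f e" for e
  proof (cases "H e = 0")
    case True
    then show ?thesis using nonneg by simp
  next
    case False
    then have "\<epsilon> \<le> f e / \<bar>H e\<bar>" unfolding \<epsilon>_def using fin by (intro Min_le) auto
    then show ?thesis using False by (simp add: pos_le_divide_eq)
  qed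
  ultimately show ?thesis by blast
qed

lemma is_flow_perturb:
  assumes f: "is_flow n m a f" and supp: "\<And>e. H e \<noteq> 0 \<Longrightarrow> 0 < f e" and nonneg: "\<And>e. 0 \<le> f e + s * H e"
    and circ: "\<And>i j. 1 \<le> i \<Longrightarrow> i \<le> n \<Longrightarrow> j \<le> m \<Longrightarrow> outflow n m H i j - inflow n H i j = 0"
    and sink: "(\<Sum>j\<le>m. H (V n j, S)) = 0"
  shows "is_flow n m a (\<lambda>e. f e + s * H e)"
  unfolding is_flow_def
proof (intro conjI allI impI)
  fix e assume "e \<notin> gedges n m"
  then show "f e + s * H e = 0" using is_flow_zero_off_edges[OF f] supp by fastforce
next
  fix e show "0 \<le> f e + s * H e" by (rule nonneg)
next
  fix i j assume ij: "1 \<le> i" "i \<le> n" "j \<le> m"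
  show "outflow n m (\<lambda>e. f e + s * H e) i j - inflow n (\<lambda>e. f e + s * H e) i j
      = (if j = 0 then real (a ! (i - 1)) else 0)"
    unfolding outflow_add_scaled inflow_add_scaled
    using is_flow_conservation[OF f ij] circ[OF ij] by (simp add: algebra_simps)
next
  show "(\<Sum>j\<le>m. f (V n j, S) + s * H (V n j, S)) = real (sum_list a)"
    using is_flow_sink[OF f] sink by (simp add: sum.distrib sum_distrib_left[symmetric])
qed

lemma extreme_points_iff:
  "f \<in> extreme_points P \<longleftrightarrow> f \<in> P \<and> \<not> (\<exists>y\<in>P. \<exists>z\<in>P. \<exists>t. y \<noteq> z \<and> 0 < t \<and> t < 1 \<and> f = convex_comb t y z)"
  unfolding extreme_points_def convex_comb_def by auto

lemma vertex_is_flow: "1 \<le> n \<Longrightarrow> f \<in> extreme_points (flow_polytope n m a) \<Longrightarrow> is_flow n m a f"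
  unfolding extreme_points_iff using flow_polytope_iff_is_flow by blast

text \<open>A nonzero circulation supported where \<open>f\<close> is positive can be added to \<open>f\<close> with both signs.\<close>
lemma circulation_not_vertex:
  assumes n: "1 \<le> n" and f: "is_flow n m a f" and supp: "\<And>e. H e \<noteq> 0 \<Longrightarrow> 0 < f e"
    and circ: "\<And>i j. 1 \<le> i \<Longrightarrow> i \<le> n \<Longrightarrow> j \<le> m \<Longrightarrow> outflow n m H i j - inflow n H i j = 0"
    and sink: "(\<Sum>j\<le>m. H (V n j, S)) = 0"
    and nonzero: "H e1 \<noteq> 0"
  shows "f \<notin> extreme_points (flow_polytope n m a)"
proof -
  have "{e. H e \<noteq> 0} \<subseteq> gedges n m"
  proof
    fix e assume "e \<in> {e. H e \<noteq> 0}"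
    then have "f e \<noteq> 0" using supp[of e] by simp
    then show "e \<in> gedges n m" using is_flow_zero_off_edges[OF f] by blast
  qed
  then have "finite {e. H e \<noteq> 0}" using finite_gedges finite_subset by blast
  then obtain \<epsilon> where \<epsilon>: "0 < \<epsilon>" and bound: "\<And>e. \<epsilon> * \<bar>H e\<bar> \<le> f e"
    using exists_pos_scaled_le[of H f] supp is_flow_nonneg[OF f] by blast
  have flow: "(\<lambda>e. f e + s * H e) \<in> flow_polytope n m a" if "\<bar>s\<bar> = \<epsilon>" for s
  proof -
    have "0 \<le> f e + s * H e" for e
      using bound[of e] that abs_ge_minus_self[of "s * H e"] by (simp add: abs_mult)
    then show ?thesis
      using is_flow_perturb[OF f supp _ circ sink] flow_polytope_iff_is_flow[OF n] by blast
  qed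
  have "(\<lambda>e. f e + (- \<epsilon>) * H e) \<noteq> (\<lambda>e. f e + \<epsilon> * H e)"
  proof
    assume "(\<lambda>e. f e + (- \<epsilon>) * H e) = (\<lambda>e. f e + \<epsilon> * H e)"
    then have "f e1 + (- \<epsilon>) * H e1 = f e1 + \<epsilon> * H e1" by (rule fun_cong)
    then show False using nonzero \<epsilon> by simp
  qed
  moreover have "f = convex_comb (1/2) (\<lambda>e. f e + (- \<epsilon>) * H e) (\<lambda>e. f e + \<epsilon> * H e)"
    unfolding convex_comb_def by (rule ext) (simp add: algebra_simps)
  moreover have "(\<lambda>e. f e + (- \<epsilon>) * H e) \<in> flow_polytope n m a" "(\<lambda>e. f e + \<epsilon> * H e) \<in> flow_polytope n m a"
    using flow[of "- \<epsilon>"] flow[of \<epsilon>] \<epsilon> by simp_all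
  ultimately show ?thesis unfolding extreme_points_iff by force
qed

text \<open>Otherwise two paths from \<open>(i, 0)\<close> to the sink, one through each outgoing edge, differ by a
  nonzero circulation.\<close>
lemma vertex_right_or_down_zero:
  assumes n: "1 \<le> n" and vertex: "f \<in> extreme_points (flow_polytope n (Suc m) a)"
    and i: "1 \<le> i" "i \<le> n"
  shows "right_flow f i 0 = 0 \<or> down_flow n f i 0 = 0"
proof (rule ccontr)
  assume both: "\<not> (right_flow f i 0 = 0 \<or> down_flow n f i 0 = 0)"
  have f: "is_flow n (Suc m) a f" using vertex_is_flow[OF n vertex] .
  have "0 \<le> right_flow f i 0" "0 \<le> down_flow n f i 0"
    by (simp_all add: right_flow_def down_flow_def is_flow_nonneg[OF f])
  then have right: "0 < right_flow f i 0" and down: "0 < down_flow n f i 0" using both by auto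
  obtain H1 where H1: "path_flow n (Suc m) f i 0 H1" "H1 (V i 0, V i 1) = 1"
    using path_flow_via_right[OF f i _ right] by auto
  obtain H2 where H2: "path_flow n (Suc m) f i 0 H2" "H2 (V i 0, V i 1) = 0"
    using path_flow_via_down[OF f i _ down] by auto
  let ?H = "\<lambda>e. H1 e - H2 e"
  have "f \<notin> extreme_points (flow_polytope n (Suc m) a)"
  proof (rule circulation_not_vertex[OF n f, of ?H "(V i 0, V i 1)"])
    show "0 < f e" if "?H e \<noteq> 0" for e
      using that path_flow_support[OF H1(1), of e] path_flow_support[OF H2(1), of e] by fastforce
    show "outflow n (Suc m) ?H i' j' - inflow n ?H i' j' = 0"
      if "1 \<le> i'" "i' \<le> n" "j' \<le> Suc m" for i' j'
      unfolding outflow_diff inflow_diff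
      using path_flow_divergence[OF H1(1) that] path_flow_divergence[OF H2(1) that] by simp
    show "(\<Sum>j\<le>Suc m. ?H (V n j, S)) = 0"
      using path_flow_sink_sum[OF H1(1)] path_flow_sink_sum[OF H2(1)] by (simp add: sum_subtractf)
    show "?H (V i 0, V i 1) \<noteq> 0" using H1(2) H2(2) by simp
  qed
  then show False using vertex by contradiction
qed

subsection \<open>Vertices of \<open>G(n, m + 1)\<close> from vertices of \<open>G(n, m)\<close>\<close>

definition follows_pattern :: "nat \<Rightarrow> nat list \<Rightarrow> (gv \<times> gv \<Rightarrow> real) \<Rightarrow> bool" where
  "follows_pattern n w f \<longleftrightarrow> (\<forall>i. 1 \<le> i \<longrightarrow> i \<le> n \<longrightarrow>
     (w ! (i - 1) = 1 \<longrightarrow> down_flow n f i 0 = 0) \<and> (w ! (i - 1) \<noteq> 1 \<longrightarrow> right_flow f i 0 = 0))"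

definition col0_pattern :: "nat \<Rightarrow> (gv \<times> gv \<Rightarrow> real) \<Rightarrow> nat list" where
  "col0_pattern n f = map (\<lambda>k. if 0 < right_flow f (Suc k) 0 then 1 else 0) [0..<n]"

lemma follows_pattern_col0:
  assumes f: "is_flow n (Suc m) a f" and w: "follows_pattern n w f" and i: "1 \<le> i" "i \<le> n"
  shows "down_flow n f i 0 = real (col0_down a w i) \<and> right_flow f i 0 = real (col0_right a w i)"
  using w is_flow_col0[OF f] unfolding follows_pattern_def
  by (intro col0_flows_unique[where B = "\<lambda>i. right_flow f i 0" and C = "\<lambda>i. down_flow n f i 0", OF _ _ i]) auto

lemma follows_pattern_shift_flow:
  assumes n: "1 \<le> n" and a: "length a = n" and f: "is_flow n (Suc m) a f" and w: "follows_pattern n w f"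
  shows "is_flow n m (col0_rights a w) (shift_flow f)"
    and "extend_by_pattern n a w (shift_flow f) = f"
proof -
  show "is_flow n m (col0_rights a w) (shift_flow f)"
    using follows_pattern_col0[OF f w] a by (intro is_flow_shift_flow[OF n a _ f]) (auto simp: nth_col0_rights)
  have "extend_by_pattern n a w (shift_flow f)
      = extend_flow n (\<lambda>i. right_flow f i 0) (\<lambda>i. down_flow n f i 0) (shift_flow f)"
    unfolding extend_by_pattern_def using follows_pattern_col0[OF f w] by (intro extend_flow_cong) auto
  then show "extend_by_pattern n a w (shift_flow f) = f" using extend_flow_shift_flow[OF n f] by simp
qed

lemma shift_flow_extend_by_pattern: "is_flow n m b g \<Longrightarrow> shift_flow (extend_by_pattern n a w g) = g"
  unfolding extend_by_pattern_def by (rule shift_flow_extend_flow[OF is_flow_zero_off_edges])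

lemma vertex_follows_col0_pattern:
  assumes n: "1 \<le> n" and vertex: "f \<in> extreme_points (flow_polytope n (Suc m) a)"
  shows "follows_pattern n (col0_pattern n f) f"
  unfolding follows_pattern_def
proof (intro allI impI)
  fix i assume i: "1 \<le> i" "i \<le> n"
  have "is_flow n (Suc m) a f" using vertex_is_flow[OF n vertex] .
  then have "0 \<le> right_flow f i 0" using is_flow_nonneg by (simp add: right_flow_def)
  moreover have "col0_pattern n f ! (i - 1) = (if 0 < right_flow f i 0 then 1 else 0)"
    using i by (simp add: col0_pattern_def)
  ultimately show "(col0_pattern n f ! (i - 1) = 1 \<longrightarrow> down_flow n f i 0 = 0) \<and>
      (col0_pattern n f ! (i - 1) \<noteq> 1 \<longrightarrow> right_flow f i 0 = 0)"
    using vertex_right_or_down_zero[OF n vertex i] by auto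
qed

lemma col0_pattern_admissible:
  assumes n: "1 \<le> n" and a: "length a = n" and vertex: "f \<in> extreme_points (flow_polytope n (Suc m) a)"
  shows "col0_pattern n f \<in> admissible a"
  unfolding admissible_def
proof (intro CollectI conjI allI impI)
  show "length (col0_pattern n f) = length a" "set (col0_pattern n f) \<subseteq> {0, 1}"
    using a by (auto simp: col0_pattern_def)
  fix k assume k: "k < length a" "col0_pattern n f ! k = 1"
  then have "0 < right_flow f (Suc k) 0" using a by (simp add: col0_pattern_def split: if_splits)
  moreover have "is_flow n (Suc m) a f" using vertex_is_flow[OF n vertex] .
  then have "right_flow f (Suc k) 0 = real (col0_right a (col0_pattern n f) (Suc k))"
    using follows_pattern_col0[OF _ vertex_follows_col0_pattern[OF n vertex]] k a by simp
  ultimately show "0 < col0_right a (col0_pattern n f) (Suc k)" by simp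
qed

lemma shift_flow_vertex:
  assumes n: "1 \<le> n" and a: "length a = n" and vertex: "f \<in> extreme_points (flow_polytope n (Suc m) a)"
    and w: "follows_pattern n w f"
  shows "shift_flow f \<in> extreme_points (flow_polytope n m (col0_rights a w))"
  unfolding extreme_points_iff
proof (intro conjI notI)
  have f: "is_flow n (Suc m) a f" using vertex_is_flow[OF n vertex] .
  note shift = follows_pattern_shift_flow[OF n a f w]
  show "shift_flow f \<in> flow_polytope n m (col0_rights a w)"
    using shift(1) flow_polytope_iff_is_flow[OF n] by blast
  assume "\<exists>g1\<in>flow_polytope n m (col0_rights a w). \<exists>g2\<in>flow_polytope n m (col0_rights a w). \<exists>t.
    g1 \<noteq> g2 \<and> 0 < t \<and> t < 1 \<and> shift_flow f = convex_comb t g1 g2"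
  then obtain g1 g2 t where g: "is_flow n m (col0_rights a w) g1" "is_flow n m (col0_rights a w) g2"
    and ne: "g1 \<noteq> g2" and t: "0 < t" "t < 1" and comb: "shift_flow f = convex_comb t g1 g2"
    using flow_polytope_iff_is_flow[OF n] by blast
  have "extend_by_pattern n a w g1 \<noteq> extend_by_pattern n a w g2"
    using ne shift_flow_extend_by_pattern[OF g(1)] shift_flow_extend_by_pattern[OF g(2)] by metis
  moreover have "f = convex_comb t (extend_by_pattern n a w g1) (extend_by_pattern n a w g2)"
    using shift(2) comb by (simp add: extend_by_pattern_def extend_flow_convex_comb)
  moreover have "extend_by_pattern n a w g1 \<in> flow_polytope n (Suc m) a"
    "extend_by_pattern n a w g2 \<in> flow_polytope n (Suc m) a"
    using is_flow_extend_by_pattern[OF n a] g flow_polytope_iff_is_flow[OF n] by blast+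
  ultimately show False using vertex t unfolding extreme_points_iff by blast
qed

lemma right_flow_convex_comb: "right_flow (convex_comb t f g) i j = (1 - t) * right_flow f i j + t * right_flow g i j"
  by (simp add: right_flow_def convex_comb_def)

lemma down_flow_convex_comb:
  "down_flow n (convex_comb t f g) i j = (1 - t) * down_flow n f i j + t * down_flow n g i j"
  by (simp add: down_flow_def convex_comb_def)

lemma convex_comb_follows_pattern:
  assumes f: "is_flow n k a f" and g: "is_flow n k a g" and t: "0 < t" "t < 1"
    and comb: "extend_by_pattern n b w h = convex_comb t f g"
  shows "follows_pattern n w f"
  unfolding follows_pattern_def
proof (intro allI impI)
  fix i assume i: "1 \<le> i" "i \<le> n"
  have "0 \<le> (1 - t) * right_flow f i 0" "0 \<le> t * right_flow g i 0"
    "0 \<le> (1 - t) * down_flow n f i 0" "0 \<le> t * down_flow n g i 0"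
    using t is_flow_nonneg[OF f] is_flow_nonneg[OF g] by (simp_all add: right_flow_def down_flow_def)
  moreover have "(1 - t) * right_flow f i 0 + t * right_flow g i 0 = real (col0_right b w i)"
    unfolding right_flow_convex_comb[symmetric] comb[symmetric] extend_by_pattern_def
    by (rule right_flow_extend_flow[OF i])
  moreover have "(1 - t) * down_flow n f i 0 + t * down_flow n g i 0 = real (col0_down b w i)"
    unfolding down_flow_convex_comb[symmetric] comb[symmetric] extend_by_pattern_def
    by (rule down_flow_extend_flow[OF i])
  moreover obtain k where "i = Suc k" using i by (cases i) auto
  ultimately show "(w ! (i - 1) = 1 \<longrightarrow> down_flow n f i 0 = 0) \<and> (w ! (i - 1) \<noteq> 1 \<longrightarrow> right_flow f i 0 = 0)"
    using t by (auto simp: add_nonneg_eq_0_iff)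
qed

lemma extend_by_pattern_vertex:
  assumes n: "1 \<le> n" and a: "length a = n"
    and vertex: "g \<in> extreme_points (flow_polytope n m (col0_rights a w))"
  shows "extend_by_pattern n a w g \<in> extreme_points (flow_polytope n (Suc m) a)"
  unfolding extreme_points_iff
proof (intro conjI notI)
  have g: "is_flow n m (col0_rights a w) g" using vertex_is_flow[OF n vertex] .
  show "extend_by_pattern n a w g \<in> flow_polytope n (Suc m) a"
    using is_flow_extend_by_pattern[OF n a g] flow_polytope_iff_is_flow[OF n] by blast
  assume "\<exists>f1\<in>flow_polytope n (Suc m) a. \<exists>f2\<in>flow_polytope n (Suc m) a. \<exists>t.
    f1 \<noteq> f2 \<and> 0 < t \<and> t < 1 \<and> extend_by_pattern n a w g = convex_comb t f1 f2"
  then obtain f1 f2 t where f: "is_flow n (Suc m) a f1" "is_flow n (Suc m) a f2"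
    and ne: "f1 \<noteq> f2" and t: "0 < t" "t < 1" and comb: "extend_by_pattern n a w g = convex_comb t f1 f2"
    using flow_polytope_iff_is_flow[OF n] by blast
  have "follows_pattern n w f1" using convex_comb_follows_pattern[OF f t comb] .
  moreover have "convex_comb t f1 f2 = convex_comb (1 - t) f2 f1"
    unfolding convex_comb_def by (rule ext) simp
  then have "follows_pattern n w f2"
    using convex_comb_follows_pattern[OF f(2,1), of "1 - t"] t comb by simp
  ultimately have shift1: "is_flow n m (col0_rights a w) (shift_flow f1)"
      "extend_by_pattern n a w (shift_flow f1) = f1"
    and shift2: "is_flow n m (col0_rights a w) (shift_flow f2)"
      "extend_by_pattern n a w (shift_flow f2) = f2"
    using follows_pattern_shift_flow[OF n a] f by blast+
  have "g = convex_comb t (shift_flow f1) (shift_flow f2)"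
    using arg_cong[OF comb, of shift_flow] by (simp add: shift_flow_extend_by_pattern[OF g] shift_flow_convex_comb)
  then have "shift_flow f1 = shift_flow f2"
    using vertex t shift1(1) shift2(1) flow_polytope_iff_is_flow[OF n] unfolding extreme_points_iff by blast
  then show False using ne shift1(2) shift2(2) by metis
qed

lemma vertex_eq_extend_by_pattern:
  assumes n: "1 \<le> n" and a: "length a = n" and vertex: "f \<in> extreme_points (flow_polytope n (Suc m) a)"
  shows "extend_by_pattern n a (col0_pattern n f) (shift_flow f) = f"
  using follows_pattern_shift_flow(2)[OF n a vertex_is_flow[OF n vertex]]
    vertex_follows_col0_pattern[OF n vertex] by blast

lemma vertices_Suc_eq_image:
  assumes n: "1 \<le> n" and a: "length a = n"
  shows "extreme_points (flow_polytope n (Suc m) a) = (\<lambda>(w, g). extend_by_pattern n a w g) `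
     (SIGMA w:admissible a. extreme_points (flow_polytope n m (col0_rights a w)))"
proof (intro equalityI subsetI)
  fix f assume vertex: "f \<in> extreme_points (flow_polytope n (Suc m) a)"
  have "(col0_pattern n f, shift_flow f) \<in> (SIGMA w:admissible a. extreme_points (flow_polytope n m (col0_rights a w)))"
    using col0_pattern_admissible[OF n a vertex]
      shift_flow_vertex[OF n a vertex vertex_follows_col0_pattern[OF n vertex]] by blast
  then show "f \<in> (\<lambda>(w, g). extend_by_pattern n a w g) `
     (SIGMA w:admissible a. extreme_points (flow_polytope n m (col0_rights a w)))"
    using vertex_eq_extend_by_pattern[OF n a vertex] by force
qed (use extend_by_pattern_vertex[OF n a] in auto)

lemma inj_on_extend_by_pattern:
  assumes n: "1 \<le> n" and a: "length a = n"
  shows "inj_on (\<lambda>(w, g). extend_by_pattern n a w g)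
    (SIGMA w:admissible a. extreme_points (flow_polytope n m (col0_rights a w)))"
proof (rule inj_onI)
  fix p q
  assume p: "p \<in> (SIGMA w:admissible a. extreme_points (flow_polytope n m (col0_rights a w)))"
    and q: "q \<in> (SIGMA w:admissible a. extreme_points (flow_polytope n m (col0_rights a w)))"
    and eq_pq: "(\<lambda>(w, g). extend_by_pattern n a w g) p = (\<lambda>(w, g). extend_by_pattern n a w g) q"
  obtain w g w' g' where pq: "p = (w, g)" "q = (w', g')" by fastforce
  have w: "w \<in> admissible a" and g: "g \<in> extreme_points (flow_polytope n m (col0_rights a w))"
    and w': "w' \<in> admissible a" and g': "g' \<in> extreme_points (flow_polytope n m (col0_rights a w'))"
    and eq: "extend_by_pattern n a w g = extend_by_pattern n a w' g'"
    using p q eq_pq pq by auto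
  have "is_flow n m (col0_rights a w) g" "is_flow n m (col0_rights a w') g'"
    using vertex_is_flow[OF n g] vertex_is_flow[OF n g'] .
  then have "g = g'" using arg_cong[OF eq, of shift_flow] by (simp add: shift_flow_extend_by_pattern)
  moreover have "w = w'"
  proof (rule nth_equalityI)
    show "length w = length w'" using w w' unfolding admissible_def by simp
    fix k assume "k < length w"
    then have k: "k < length a" using w unfolding admissible_def by simp
    have "right_flow (extend_by_pattern n a w g) (Suc k) 0 = real (col0_right a w (Suc k))"
      "right_flow (extend_by_pattern n a w' g') (Suc k) 0 = real (col0_right a w' (Suc k))"
      using k a by (simp_all add: extend_by_pattern_def right_flow_extend_flow del: col0_right.simps)
    then have "col0_right a w (Suc k) = col0_right a w' (Suc k)" using eq by (simp del: col0_right.simps)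
    then show "w ! k = w' ! k" using admissible_nth[OF w k] admissible_nth[OF w' k] by (simp del: col0_right.simps)
  qed
  ultimately show "p = q" using pq by simp
qed

lemma
  assumes n: "1 \<le> n" and a: "length a = n"
    and fin: "\<And>w. w \<in> admissible a \<Longrightarrow> finite (extreme_points (flow_polytope n m (col0_rights a w)))"
  shows finite_vertices_Suc: "finite (extreme_points (flow_polytope n (Suc m) a))"
    and card_vertices_Suc: "card (extreme_points (flow_polytope n (Suc m) a))
      = (\<Sum>w\<in>admissible a. card (extreme_points (flow_polytope n m (col0_rights a w))))"
proof -
  have "finite (SIGMA w:admissible a. extreme_points (flow_polytope n m (col0_rights a w)))"
    using finite_admissible fin by (intro finite_SigmaI) auto
  then show "finite (extreme_points (flow_polytope n (Suc m) a))"
    unfolding vertices_Suc_eq_image[OF n a] by simp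
  have "card (extreme_points (flow_polytope n (Suc m) a))
      = card (SIGMA w:admissible a. extreme_points (flow_polytope n m (col0_rights a w)))"
    unfolding vertices_Suc_eq_image[OF n a] by (rule card_image[OF inj_on_extend_by_pattern[OF n a]])
  also have "\<dots> = (\<Sum>w\<in>admissible a. card (extreme_points (flow_polytope n m (col0_rights a w))))"
    using finite_admissible fin by simp
  finally show "card (extreme_points (flow_polytope n (Suc m) a))
      = (\<Sum>w\<in>admissible a. card (extreme_points (flow_polytope n m (col0_rights a w))))" .
qed

text \<open>In \<open>G(n, 0)\<close> all flow goes down, as in the all-zero pattern.\<close>
definition column_flow :: "nat \<Rightarrow> nat list \<Rightarrow> gv \<times> gv \<Rightarrow> real" where
  "column_flow n b = extend_flow n (\<lambda>_. 0) (\<lambda>i. real (col0_down b (replicate n 0) i)) (\<lambda>_. 0)"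

lemma column_flow_nonzero:
  "column_flow n b (x, y) \<noteq> 0 \<Longrightarrow>
    \<exists>i. x = V i 0 \<and> 1 \<le> i \<and> i \<le> n \<and> ((i < n \<and> y = V (Suc i) 0) \<or> (i = n \<and> y = S))"
  by (auto simp: column_flow_def extend_flow_def split: gv.splits if_splits)

lemma is_flow_column_flow:
  assumes n: "1 \<le> n" and b: "length b = n"
  shows "is_flow n 0 b (column_flow n b)"
  unfolding is_flow_def
proof (intro conjI allI impI)
  fix e assume off: "e \<notin> gedges n 0"
  show "column_flow n b e = 0"
  proof (rule ccontr)
    assume "column_flow n b e \<noteq> 0"
    then obtain i where "fst e = V i 0" "1 \<le> i" "i \<le> n" "(i < n \<and> snd e = V (Suc i) 0) \<or> (i = n \<and> snd e = S)"
      using column_flow_nonzero[of n b "fst e" "snd e"] by auto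
    then have "(fst e, snd e) \<in> gedges n 0" using n by (auto simp: mem_gedges)
    then show False using off by simp
  qed
next
  fix e show "0 \<le> column_flow n b e"
    by (cases e) (auto simp: column_flow_def extend_flow_def split: gv.splits)
next
  fix i j :: nat assume i: "1 \<le> i" "i \<le> n" and "j \<le> 0"
  then have j: "j = 0" by simp
  obtain k where k: "i = Suc k" using i by (cases i) auto
  have "col0_right b (replicate n 0) i = 0" using i k by simp
  moreover have "down_flow n (column_flow n b) i' 0 = real (col0_down b (replicate n 0) i')"
    if "1 \<le> i'" "i' \<le> n" for i'
    unfolding column_flow_def using that by (rule down_flow_extend_flow)
  ultimately show "outflow n 0 (column_flow n b) i j - inflow n (column_flow n b) i j
      = (if j = 0 then real (b ! (i - 1)) else 0)"
    using col0_right_plus_down[of b "replicate n 0" k] i j k by (auto simp: outflow_def inflow_def)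
next
  have "sum_list (col0_rights b (replicate n 0)) = 0"
    using b by (simp add: col0_rights_def)
  then have "col0_down b (replicate n 0) n = sum_list b"
    using col0_down_plus_sum_list_col0_rights[of b "replicate n 0"] b by (metis add.right_neutral)
  then show "(\<Sum>j\<le>0. column_flow n b (V n j, S)) = real (sum_list b)"
    using n by (simp add: column_flow_def extend_flow_def)
qed

lemma is_flow_0_unique:
  assumes n: "1 \<le> n" and f: "is_flow n 0 b f"
  shows "f = column_flow n b"
proof (rule ext, clarify)
  fix x y
  show "f (x, y) = column_flow n b (x, y)"
  proof (cases "(x, y) \<in> gedges n 0")
    case True
    then obtain i where i: "1 \<le> i" "i \<le> n" and x: "x = V i 0"
      and y: "(i < n \<and> y = V (Suc i) 0) \<or> (i = n \<and> y = S)"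
      using n by (auto simp: mem_gedges)
    have "down_flow n f i 0 = real (col0_down b (replicate n 0) i)"
      using is_flow_conservation[OF f] i
      by (intro conjunct1[OF col0_flows_unique[where B = "\<lambda>_. 0", OF _ _ i]])
        (auto simp: outflow_def inflow_def)
    then show ?thesis using x y i by (auto simp: down_flow_def column_flow_def extend_flow_def)
  next
    case False
    then show ?thesis
      using is_flow_zero_off_edges[OF f] column_flow_nonzero[of n b x y] n by (auto simp: mem_gedges)
  qed
qed

lemma vertices_0:
  assumes "1 \<le> n" "length b = n"
  shows "extreme_points (flow_polytope n 0 b) = {column_flow n b}"
proof -
  have "flow_polytope n 0 b = {column_flow n b}"
    using is_flow_column_flow[OF assms] is_flow_0_unique[OF assms(1)] flow_polytope_iff_is_flow[OF assms(1)]
    by blast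
  then show ?thesis unfolding extreme_points_def by auto
qed

lemma length_chi [simp]: "length (chi a) = length a"
  unfolding chi_def by simp

lemma set_chi: "set (chi a) \<subseteq> {0, 1}"
  unfolding chi_def by auto

lemma chi_01: "set v \<subseteq> {0, 1} \<Longrightarrow> chi v = v"
  unfolding chi_def by (rule map_idI) auto

lemma col0_down_chi_pos: "i \<le> length a \<Longrightarrow> 0 < col0_down (chi a) w i \<longleftrightarrow> 0 < col0_down a w i"
proof (induction i)
  case (Suc i)
  then have "chi a ! i = (if 0 < a ! i then 1 else 0)" unfolding chi_def by simp
  then show ?case using Suc by auto
qed simp

lemma admissible_chi: "admissible (chi a) = admissible a"
proof -
  have "0 < col0_right (chi a) w (Suc k) \<longleftrightarrow> 0 < col0_right a w (Suc k)" if "k < length a" for w k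
  proof -
    have "chi a ! k = (if 0 < a ! k then 1 else 0)" using that unfolding chi_def by simp
    then show ?thesis using col0_down_chi_pos[of k a w] that by auto
  qed
  then show ?thesis unfolding admissible_def length_chi by (simp del: col0_right.simps)
qed

lemma chi_col0_rights:
  assumes w: "w \<in> admissible a"
  shows "chi (col0_rights a w) = w"
proof (rule nth_equalityI)
  show "length (chi (col0_rights a w)) = length w" using w unfolding admissible_def by simp
  fix k assume "k < length (chi (col0_rights a w))"
  then have k: "k < length a" by simp
  then have "chi (col0_rights a w) ! k = (if 0 < col0_right a w (Suc k) then 1 else 0)"
    unfolding chi_def by (simp add: nth_col0_rights del: col0_right.simps)
  then show "chi (col0_rights a w) ! k = w ! k" using admissible_nth[OF w k] by (simp del: col0_right.simps)
qed

lemma finite_vertices: "1 \<le> n \<Longrightarrow> length a = n \<Longrightarrow> finite (extreme_points (flow_polytope n m a))"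
proof (induction m arbitrary: a)
  case 0
  then show ?case using vertices_0 by simp
next
  case (Suc m)
  then show ?case using finite_vertices_Suc by simp
qed

text \<open>Both sides decompose over the same admissible patterns, into netflows with equal support.\<close>
lemma card_vertices_chi:
  "1 \<le> n \<Longrightarrow> length a = n \<Longrightarrow> length a' = n \<Longrightarrow> chi a = chi a' \<Longrightarrow>
    card (extreme_points (flow_polytope n m a)) = card (extreme_points (flow_polytope n m a'))"
proof (induction m arbitrary: a a')
  case 0
  then show ?case using vertices_0 by simp
next
  case (Suc m)
  have adm: "admissible a = admissible a'" using admissible_chi[of a] admissible_chi[of a'] Suc.prems by simp
  have "card (extreme_points (flow_polytope n (Suc m) a))
      = (\<Sum>w\<in>admissible a. card (extreme_points (flow_polytope n m (col0_rights a w))))"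
    using card_vertices_Suc finite_vertices Suc.prems by simp
  also have "\<dots> = (\<Sum>w\<in>admissible a'. card (extreme_points (flow_polytope n m (col0_rights a' w))))"
    using Suc.IH Suc.prems adm chi_col0_rights by (intro sum.cong) auto
  also have "\<dots> = card (extreme_points (flow_polytope n (Suc m) a'))"
    using card_vertices_Suc finite_vertices Suc.prems by simp
  finally show ?case .
qed

lemma num_vertices_Suc:
  assumes n: "1 \<le> n" and a: "length a = n"
  shows "num_vertices n (Suc m) a = (\<Sum>w\<in>admissible a. num_vertices n m w)"
proof -
  have "num_vertices n (Suc m) a = (\<Sum>w\<in>admissible a. card (extreme_points (flow_polytope n m (col0_rights a w))))"
    unfolding num_vertices_def using card_vertices_Suc[OF n a] finite_vertices[OF n] a by simp
  also have "\<dots> = (\<Sum>w\<in>admissible a. num_vertices n m w)"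
  proof (rule sum.cong[OF refl])
    fix w assume w: "w \<in> admissible a"
    then have "length w = n" "chi w = w" using a chi_01 unfolding admissible_def by auto
    then show "card (extreme_points (flow_polytope n m (col0_rights a w))) = num_vertices n m w"
      using card_vertices_chi[OF n, of "col0_rights a w" w m] vertices_0[OF n] a chi_col0_rights[OF w]
      by (auto simp: num_vertices_def)
  qed
  finally show ?thesis .
qed

subsection \<open>The matching condition\<close>

definition greedy_within_1 :: "nat list \<Rightarrow> nat set \<Rightarrow> bool" where
  "greedy_within_1 L A \<longleftrightarrow> (\<exists>M. greedy_match L A = Some M \<and> (\<forall>p\<in>set M. fst p - snd p \<le> 1))"

lemma greedy_within_1_Nil: "greedy_within_1 [] A"
  unfolding greedy_within_1_def by simp

lemma greedy_within_1_Cons: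
  "greedy_within_1 (x # L) A \<longleftrightarrow>
    {j \<in> A. j \<le> x} \<noteq> {} \<and> x - Max {j \<in> A. j \<le> x} \<le> 1 \<and> greedy_within_1 L (A - {Max {j \<in> A. j \<le> x}})"
  unfolding greedy_within_1_def by (auto simp: Let_def)

lemma greedy_match_insert_large:
  "(\<forall>x\<in>set L. x < y) \<Longrightarrow> greedy_match L (insert y A) = greedy_match L A"
proof (induction L arbitrary: A)
  case Nil
  then show ?case by simp
next
  case (Cons x L)
  let ?C = "{j \<in> A. j \<le> x}"
  have C: "{j \<in> insert y A. j \<le> x} = ?C" using Cons.prems by auto
  have e1: "greedy_match (x # L) (insert y A) = (if ?C = {} then None else
      map_option (Cons (x, Max ?C)) (greedy_match L (insert y A - {Max ?C})))"
    by (simp only: greedy_match.simps Let_def C)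
  have e2: "greedy_match (x # L) A = (if ?C = {} then None else
      map_option (Cons (x, Max ?C)) (greedy_match L (A - {Max ?C})))"
    by (simp only: greedy_match.simps Let_def)
  show ?case
  proof (cases "?C = {}")
    case True
    then show ?thesis unfolding e1 e2 by simp
  next
    case False
    have "Max ?C \<le> x" using False by (intro Max.boundedI) auto
    then have "insert y A - {Max ?C} = insert y (A - {Max ?C})" using Cons.prems by auto
    then show ?thesis unfolding e1 e2 using Cons.IH Cons.prems False by auto
  qed
qed

lemma zeros_snoc: "zeros (v @ [x]) = (if x = 0 then insert (Suc (length v)) (zeros v) else zeros v)"
  unfolding zeros_def by (auto simp: nth_append less_Suc_eq_le le_Suc_eq)

lemma zeros_subset: "zeros v \<subseteq> {1..length v}"
  unfolding zeros_def by auto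

lemma finite_zeros: "finite (zeros v)"
  using finite_subset[OF zeros_subset] by blast

lemma zeros_Nil: "zeros [] = {}"
  unfolding zeros_def by auto

lemma rev_sorted_list_of_set_insert_Suc:
  assumes "finite Z" "\<forall>z\<in>Z. z \<le> k"
  shows "rev (sorted_list_of_set (insert (Suc k) Z)) = Suc k # rev (sorted_list_of_set Z)"
proof -
  have "Suc k \<notin> Z" using assms by auto
  then have "sorted_list_of_set (insert (Suc k) Z) = insort (Suc k) (sorted_list_of_set Z)"
    using assms(1) by (rule sorted_list_of_set_insert[rotated])
  also have "\<dots> = sorted_list_of_set Z @ [Suc k]"
    by (rule sorted_insort_is_snoc) (use assms in auto)
  finally show ?thesis by simp
qed

definition matching_within_1 :: "nat list \<Rightarrow> nat list \<Rightarrow> bool" where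
  "matching_within_1 v w = greedy_within_1 (rev (sorted_list_of_set (zeros v))) (zeros w)"

lemma mem_rev_sorted_zeros_le: "x \<in> set (rev (sorted_list_of_set (zeros v))) \<Longrightarrow> x \<le> length v"
  using zeros_subset finite_zeros by fastforce

lemma matching_within_1_snoc_nonzero:
  assumes "length w = length v" "x \<noteq> 0"
  shows "matching_within_1 (v @ [x]) (w @ [y]) = matching_within_1 v w"
proof -
  have "\<forall>z\<in>set (rev (sorted_list_of_set (zeros v))). z < Suc (length w)"
    using mem_rev_sorted_zeros_le assms(1) by fastforce
  then show ?thesis using assms unfolding matching_within_1_def greedy_within_1_def
    by (simp add: zeros_snoc greedy_match_insert_large)
qed

lemma matching_within_1_snoc_0_0:
  assumes "length w = length v"
  shows "matching_within_1 (v @ [0]) (w @ [0]) = matching_within_1 v w"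
proof -
  let ?k = "length v"
  have z0: "zeros (v @ [0]) = insert (Suc ?k) (zeros v)" by (simp add: zeros_snoc)
  have L: "rev (sorted_list_of_set (zeros (v @ [0]))) = Suc ?k # rev (sorted_list_of_set (zeros v))"
    unfolding z0 by (rule rev_sorted_list_of_set_insert_Suc[OF finite_zeros]) (use zeros_subset[of v] in auto)
  have A: "zeros (w @ [0]) = insert (Suc ?k) (zeros w)" using assms by (simp add: zeros_snoc)
  have nz: "Suc ?k \<notin> zeros w" using zeros_subset[of w] assms by auto
  have C: "{j \<in> insert (Suc ?k) (zeros w). j \<le> Suc ?k} = insert (Suc ?k) (zeros w)"
    using zeros_subset[of w] assms by auto
  have M: "Max (insert (Suc ?k) (zeros w)) = Suc ?k"
    using zeros_subset[of w] assms finite_zeros by (intro Max_eqI) auto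
  show ?thesis unfolding matching_within_1_def L A greedy_within_1_Cons C M using nz by simp
qed

lemma matching_within_1_snoc_0_pos:
  assumes "length w = length v" "y \<noteq> 0"
  shows "matching_within_1 (v @ [0]) (w @ [y]) \<longleftrightarrow>
    length v \<in> zeros w \<and> greedy_within_1 (rev (sorted_list_of_set (zeros v))) (zeros w - {length v})"
proof -
  let ?k = "length v"
  let ?L = "rev (sorted_list_of_set (zeros v))"
  have z0: "zeros (v @ [0]) = insert (Suc ?k) (zeros v)" by (simp add: zeros_snoc)
  have L: "rev (sorted_list_of_set (zeros (v @ [0]))) = Suc ?k # ?L"
    unfolding z0 by (rule rev_sorted_list_of_set_insert_Suc[OF finite_zeros]) (use zeros_subset[of v] in auto)
  have A: "zeros (w @ [y]) = zeros w" using assms by (simp add: zeros_snoc)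
  have C: "{j \<in> zeros w. j \<le> Suc ?k} = zeros w" using zeros_subset[of w] assms by auto
  have G: "matching_within_1 (v @ [0]) (w @ [y]) \<longleftrightarrow>
      zeros w \<noteq> {} \<and> Suc ?k - Max (zeros w) \<le> 1 \<and> greedy_within_1 ?L (zeros w - {Max (zeros w)})"
    unfolding matching_within_1_def L A greedy_within_1_Cons C ..
  show ?thesis
  proof (cases "?k \<in> zeros w")
    case True
    have "Max (zeros w) = ?k"
      using zeros_subset[of w] assms finite_zeros True by (intro Max_eqI) auto
    then show ?thesis using G True by auto
  next
    case False
    have "\<not> (zeros w \<noteq> {} \<and> Suc ?k - Max (zeros w) \<le> 1)"
    proof
      assume h: "zeros w \<noteq> {} \<and> Suc ?k - Max (zeros w) \<le> 1"
      have mi: "Max (zeros w) \<in> zeros w" using h finite_zeros by (intro Max_in) auto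
      then have "Max (zeros w) \<le> ?k" using zeros_subset[of w] assms by auto
      then have "Max (zeros w) = ?k" using h by arith
      then show False using mi False by simp
    qed
    then show ?thesis using G False by blast
  qed
qed

lemma col0_down_append:
  "length w = length v \<Longrightarrow> i \<le> length v \<Longrightarrow> col0_down (v @ [x]) (w @ [y]) i = col0_down v w i"
  by (induction i) (auto simp: nth_append)

lemma col0_down_snoc_last:
  "length w = length v \<Longrightarrow>
    col0_down (v @ [x]) (w @ [y]) (Suc (length v)) = (if y = 1 then 0 else col0_down v w (length v) + x)"
  using col0_down_append[of w v "length v" x y] by (simp add: nth_append)

lemma col0_right_append:
  "length w = length v \<Longrightarrow> k < length v \<Longrightarrow> col0_right (v @ [x]) (w @ [y]) (Suc k) = col0_right v w (Suc k)"
  using col0_down_append[of w v k x y] by (simp add: nth_append)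

lemma admissible_snoc:
  assumes l: "length w = length v"
  shows "w @ [y] \<in> admissible (v @ [x]) \<longleftrightarrow>
    w \<in> admissible v \<and> y \<in> {0, 1} \<and> (y = 1 \<longrightarrow> 0 < col0_down v w (length v) + x)"
proof -
  have "col0_right (v @ [x]) (w @ [y]) (Suc (length v)) = (if y = 1 then col0_down v w (length v) + x else 0)"
    using col0_down_append[OF l le_refl, of x y] l by (cases "y = 1") (simp_all add: nth_append)
  then have "(\<forall>k<length (v @ [x]). (w @ [y]) ! k = 1 \<longrightarrow> 0 < col0_right (v @ [x]) (w @ [y]) (Suc k)) \<longleftrightarrow>
      (\<forall>k<length v. w ! k = 1 \<longrightarrow> 0 < col0_right v w (Suc k)) \<and> (y = 1 \<longrightarrow> 0 < col0_down v w (length v) + x)"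
    using l by (auto simp: All_less_Suc nth_append col0_right_append simp del: col0_right.simps)
  then show ?thesis unfolding admissible_def using l by auto
qed

lemma admissible_Nil: "w \<in> admissible [] \<longleftrightarrow> w = []"
  unfolding admissible_def by auto

text \<open>The last zero of \<open>v @ [0]\<close> must be matched with position \<open>length v\<close>, so \<open>w\<close> must end in 0;
  the rest is the matching of \<open>v\<close> against \<open>w\<close> with that 0 replaced by 1.\<close>
lemma matching_within_1_snoc_0_1:
  assumes l: "length w = length v" and sw: "set w \<subseteq> {0, 1}"
    and IH: "\<And>u. length u = length v \<Longrightarrow> set u \<subseteq> {0, 1} \<Longrightarrow> matching_within_1 v u \<longleftrightarrow> u \<in> admissible v"
  shows "matching_within_1 (v @ [0]) (w @ [1]) \<longleftrightarrow> w @ [1] \<in> admissible (v @ [0])"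
proof -
  have match: "matching_within_1 (v @ [0]) (w @ [1]) \<longleftrightarrow>
      length v \<in> zeros w \<and> greedy_within_1 (rev (sorted_list_of_set (zeros v))) (zeros w - {length v})"
    by (rule matching_within_1_snoc_0_pos[OF l]) simp
  have adm: "w @ [1] \<in> admissible (v @ [0]) \<longleftrightarrow> w \<in> admissible v \<and> 0 < col0_down v w (length v)"
    using admissible_snoc[OF l, of 1 0] by simp
  show ?thesis
  proof (cases w rule: rev_cases)
    case Nil
    then show ?thesis using match adm l by (simp add: zeros_Nil)
  next
    case (snoc w1 y1)
    obtain v1 x1 where v: "v = v1 @ [x1]" using l snoc by (cases v rule: rev_cases) auto
    have l1: "length w1 = length v1" using l snoc v by simp
    have "Suc (length w1) \<notin> zeros w1" using zeros_subset[of w1] by auto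
    then have last_zero: "length v \<in> zeros w \<longleftrightarrow> y1 = 0"
      and zeros_rest: "y1 = 0 \<Longrightarrow> zeros w - {length v} = zeros (w1 @ [1])"
      using v l1 unfolding snoc zeros_snoc by simp_all
    have "matching_within_1 (v @ [0]) (w @ [1]) \<longleftrightarrow>
        y1 = 0 \<and> greedy_within_1 (rev (sorted_list_of_set (zeros v))) (zeros w - {length v})"
      using match last_zero by simp
    also have "\<dots> \<longleftrightarrow> y1 = 0 \<and> matching_within_1 v (w1 @ [1])"
      using zeros_rest unfolding matching_within_1_def by (cases "y1 = 0") simp_all
    also have "\<dots> \<longleftrightarrow> y1 = 0 \<and> w1 @ [1] \<in> admissible v"
      using IH[of "w1 @ [1]"] l sw snoc by auto
    also have "\<dots> \<longleftrightarrow> w @ [1] \<in> admissible (v @ [0])"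
      using adm admissible_snoc[OF l1, of y1 x1] admissible_snoc[OF l1, of 1 x1] col0_down_snoc_last[OF l1, of x1 y1]
        sw v snoc by auto
    finally show ?thesis .
  qed
qed

lemma matching_within_1_iff_admissible:
  "length w = length v \<Longrightarrow> set w \<subseteq> {0, 1} \<Longrightarrow> matching_within_1 v w \<longleftrightarrow> w \<in> admissible v"
proof (induction v arbitrary: w rule: rev_induct)
  case Nil
  then show ?case by (simp add: matching_within_1_def zeros_Nil greedy_within_1_Nil admissible_Nil)
next
  case (snoc x v)
  obtain w' y where w: "w = w' @ [y]" using snoc.prems by (cases w rule: rev_cases) auto
  have l: "length w' = length v" and sw: "set w' \<subseteq> {0, 1}" and y: "y \<in> {0, 1}"
    using snoc.prems w by auto
  consider "x \<noteq> 0" | "x = 0" "y = 0" | "x = 0" "y = 1" using y by blast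
  then show ?case
  proof cases
    case 1
    then show ?thesis
      using matching_within_1_snoc_nonzero[OF l] admissible_snoc[OF l] snoc.IH[OF l sw] y w by simp
  next
    case 2
    then show ?thesis
      using matching_within_1_snoc_0_0[OF l] admissible_snoc[OF l] snoc.IH[OF l sw] w by simp
  next
    case 3
    then show ?thesis using matching_within_1_snoc_0_1[OF l sw snoc.IH] w by simp
  qed
qed

lemma dominates_snoc:
  assumes l: "length w = length v"
  shows "dominates (v @ [x]) (w @ [y]) \<longleftrightarrow> dominates v w \<and> sum_list w + y \<le> sum_list v + x"
proof -
  have "(\<forall>i\<le>Suc (length v). P i) \<longleftrightarrow> (\<forall>i\<le>length v. P i) \<and> P (Suc (length v))" for P
    by (auto simp: le_Suc_eq)
  then show ?thesis using l unfolding dominates_def by simp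
qed

text \<open>The carry term is the extra information that makes the induction go through: a positive
  carry can still serve a later 1 of \<open>w\<close>.\<close>
lemma admissible_dominates:
  "w \<in> admissible v \<Longrightarrow>
    dominates v w \<and> sum_list w + (if 0 < col0_down v w (length v) then 1 else 0) \<le> sum_list v"
proof (induction v arbitrary: w rule: rev_induct)
  case Nil
  then show ?case by (auto simp: admissible_Nil dominates_def)
next
  case (snoc x v)
  then have "length w = Suc (length v)" unfolding admissible_def by simp
  then obtain w' y where w: "w = w' @ [y]" by (cases w rule: rev_cases) auto
  have l: "length w' = length v" using snoc.prems w unfolding admissible_def by simp
  have adm: "w' \<in> admissible v" "y \<in> {0, 1}" "y = 1 \<longrightarrow> 0 < col0_down v w' (length v) + x"
    using snoc.prems admissible_snoc[OF l, of y x] w by auto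
  note IH = snoc.IH[OF adm(1)]
  have carry: "col0_down (v @ [x]) (w' @ [y]) (length (v @ [x])) = (if y = 1 then 0 else col0_down v w' (length v) + x)"
    using col0_down_snoc_last[OF l] by simp
  show ?case
  proof (cases "y = 1")
    case True
    then have "sum_list w' + 1 \<le> sum_list v + x"
      using IH adm(3) by (cases "0 < col0_down v w' (length v)") auto
    then show ?thesis unfolding w carry using dominates_snoc[OF l] IH True by simp
  next
    case False
    then have "y = 0" using adm(2) by auto
    moreover have "sum_list w' + (if 0 < col0_down v w' (length v) + x then 1 else 0) \<le> sum_list v + x"
      using IH by (cases "0 < col0_down v w' (length v)") auto
    ultimately show ?thesis unfolding w carry using dominates_snoc[OF l] IH by auto
  qed
qed

lemma Max_diffs_le_1_iff:
  "1 = Max ({i - j |i j. (i, j) \<in> set M} \<union> {1}) \<longleftrightarrow> (\<forall>p\<in>set M. fst p - snd p \<le> (1::nat))"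
proof -
  let ?X = "(\<lambda>p. fst p - snd p) ` set M"
  have "{i - j |i j. (i, j) \<in> set M} \<union> {1} = insert 1 ?X" by force
  moreover have "Max (insert 1 ?X) = 1 \<longleftrightarrow> (\<forall>x\<in>?X. x \<le> 1)" by (subst Max_eq_iff) auto
  ultimately show ?thesis by auto
qed

lemma dominates_z_1_iff_admissible:
  assumes sv: "set v \<subseteq> {0, 1}" and sw: "set w \<subseteq> {0, 1}" and l: "length w = length v"
  shows "dominates_z v w 1 \<longleftrightarrow> w \<in> admissible v"
proof -
  have "(\<exists>M. matching v w = Some M \<and> 1 = Max ({i - j |i j. (i, j) \<in> set M} \<union> {1})) \<longleftrightarrow>
      w \<in> admissible v"
    using matching_within_1_iff_admissible[OF l sw]
    unfolding matching_def matching_within_1_def greedy_within_1_def Max_diffs_le_1_iff by simp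
  moreover have "chi v = v" "chi w = w" using sv sw by (simp_all add: chi_01)
  ultimately show ?thesis unfolding dominates_z_def using admissible_dominates l by auto
qed

lemma dominates_z_1_chi_eq_admissible:
  "{j. length j = length a \<and> set j \<subseteq> {0, 1} \<and> dominates_z (chi a) j 1} = admissible a"
proof -
  have "dominates_z (chi a) j 1 \<longleftrightarrow> j \<in> admissible (chi a)"
    if "length j = length a" "set j \<subseteq> {0, 1}" for j
    using dominates_z_1_iff_admissible[OF set_chi[of a]] that by simp
  moreover have "j \<in> admissible (chi a) \<Longrightarrow> length j = length a \<and> set j \<subseteq> {0, 1}" for j
    unfolding admissible_def by simp
  ultimately show ?thesis using admissible_chi[of a] by blast
qed

theorem corollary5p17:
  fixes n m :: nat and a :: "nat list"
  assumes "1 \<le> n" and "1 \<le> m" and "length a = n"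
  shows "num_vertices n m a =
    (\<Sum>j \<in> {j. length j = n \<and> set j \<subseteq> {0, 1} \<and> dominates_z (chi a) j 1}.
        num_vertices n (m - 1) j)"
proof -
  obtain m' where "m = Suc m'" using assms(2) by (cases m) auto
  then show ?thesis
    using num_vertices_Suc[OF assms(1,3)] dominates_z_1_chi_eq_admissible[of a] assms(3) by simp
qed

end
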